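(* Let $\mathbb{K}$ be a field and let $A\in\mathbb{K}[x]^{m\times n}$ have rank $r\ge 1$. Let $K\in\mathbb{K}[x]^{n\times(n-r)}$ be a right kernel basis of $A$, and let $R\in\mathbb{K}[x]^{r\times n}$ be a left kernel basis of $K$. Then $A$ and $R$ have the same pivot support: $\rho(A)=\rho(R)$.
   Context: A right kernel basis of $A\in\mathbb{K}[x]^{m\times n}$ of rank $r$ is a matrix in $\mathbb{K}[x]^{n\times(n-r)}$ whose columns form a basis of the $\mathbb{K}[x]$-module $\{v\in\mathbb{K}[x]^{n\times 1}: Av=0\}$; a left kernel basis of $K\in\mathbb{K}[x]^{n\times k}$ is a matrix whose rows form a basis of $\{p\in\mathbb{K}[x]^{1\times n}: pK=0\}$ (when $k=0$ this is all of $\mathbb{K}[x]^{1\times n}$). For a row vector $p=[p_1,\dots,p_n]$, $\deg(p)=\max_j\deg(p_j)$; the pivot index of a nonzero $p$ is the largest $j$ with $\deg(p_j)=\deg(p)$, and $p_j$ is its pivot entry. A matrix $P\in\mathbb{K}[x]^{k\times n}$ is in Popov form if it has no zero row, the pivot indices of its rows are strictly increasing, its pivot entries are monic, and in each column containing a pivot entry all other entries have degree strictly less than that pivot entry. The Popov form of a matrix $M$ of rank $r$ is the unique matrix in $\mathbb{K}[x]^{r\times n}$ in Popov form whose rows generate the same $\mathbb{K}[x]$-module as the rows of $M$. The pivot support $\rho(M)\in\mathbb{Z}_{>0}^r$ of $M$ is the tuple of pivot indices of the rows of its Popov form (the empty tuple if $r=0$). *)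

theory Defs
  imports "Jordan_Normal_Form.DL_Rank" "HOL-Computational_Algebra.Polynomial"
    "HOL-Computational_Algebra.Fraction_Field"
begin

definition poly_mat_rank :: "'a::field poly mat \<Rightarrow> nat" where
  "poly_mat_rank A = vec_space.rank (dim_row A) (map_mat to_fract A)"

definition cols_basis_of :: "'a::field poly mat \<Rightarrow> 'a poly vec set \<Rightarrow> bool" where
  "cols_basis_of K M \<longleftrightarrow>
     (\<forall>c \<in> carrier_vec (dim_col K). K *\<^sub>v c \<in> M) \<and>
     (\<forall>v \<in> M. \<exists>!c. c \<in> carrier_vec (dim_col K) \<and> v = K *\<^sub>v c)"

definition rows_basis_of :: "'a::field poly mat \<Rightarrow> 'a poly vec set \<Rightarrow> bool" where
  "rows_basis_of R M \<longleftrightarrow>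
     (\<forall>c \<in> carrier_vec (dim_row R). transpose_mat R *\<^sub>v c \<in> M) \<and>
     (\<forall>p \<in> M. \<exists>!c. c \<in> carrier_vec (dim_row R) \<and> p = transpose_mat R *\<^sub>v c)"

definition right_kernel :: "'a::field poly mat \<Rightarrow> 'a poly vec set" where
  "right_kernel A = {v \<in> carrier_vec (dim_col A). A *\<^sub>v v = 0\<^sub>v (dim_row A)}"

definition left_kernel :: "'a::field poly mat \<Rightarrow> 'a poly vec set" where
  "left_kernel K = {p \<in> carrier_vec (dim_row K). transpose_mat K *\<^sub>v p = 0\<^sub>v (dim_col K)}"

definition is_right_kernel_basis :: "'a::field poly mat \<Rightarrow> 'a poly mat \<Rightarrow> bool" where
  "is_right_kernel_basis A K \<longleftrightarrow>
     K \<in> carrier_mat (dim_col A) (dim_col A - poly_mat_rank A) \<and>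
     cols_basis_of K (right_kernel A)"

definition is_left_kernel_basis :: "'a::field poly mat \<Rightarrow> 'a poly mat \<Rightarrow> bool" where
  "is_left_kernel_basis K R \<longleftrightarrow>
     dim_col R = dim_row K \<and> rows_basis_of R (left_kernel K)"

(* degree of a row vector; only meaningful for nonzero vectors
   (zero entries have degree -infinity and are ignored) *)
definition vec_deg :: "'a::zero poly vec \<Rightarrow> nat" where
  "vec_deg p = Max {degree (p $ j) | j. j < dim_vec p \<and> p $ j \<noteq> 0}"

(* pivot index (0-based): largest j with deg p_j = deg p *)
definition pivot_index :: "'a::zero poly vec \<Rightarrow> nat" where
  "pivot_index p = Max {j. j < dim_vec p \<and> p $ j \<noteq> 0 \<and> degree (p $ j) = vec_deg p}"

definition is_popov :: "'a::field poly mat \<Rightarrow> bool" where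
  "is_popov P \<longleftrightarrow>
     (\<forall>i < dim_row P. row P i \<noteq> 0\<^sub>v (dim_col P)) \<and>
     (\<forall>i i'. i < i' \<and> i' < dim_row P \<longrightarrow> pivot_index (row P i) < pivot_index (row P i')) \<and>
     (\<forall>i < dim_row P. lead_coeff (P $$ (i, pivot_index (row P i))) = 1) \<and>
     (\<forall>i < dim_row P. \<forall>i' < dim_row P. i' \<noteq> i \<longrightarrow>
        P $$ (i', pivot_index (row P i)) = 0 \<or>
        degree (P $$ (i', pivot_index (row P i))) < degree (P $$ (i, pivot_index (row P i))))"

definition row_module :: "'a::field poly mat \<Rightarrow> 'a poly vec set" where
  "row_module M = {transpose_mat M *\<^sub>v c | c. c \<in> carrier_vec (dim_row M)}"

definition is_popov_form_of :: "'a::field poly mat \<Rightarrow> 'a poly mat \<Rightarrow> bool" where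
  "is_popov_form_of M P \<longleftrightarrow>
     P \<in> carrier_mat (poly_mat_rank M) (dim_col M) \<and> is_popov P \<and>
     row_module P = row_module M"

definition popov_form :: "'a::field poly mat \<Rightarrow> 'a poly mat" where
  "popov_form M = (THE P. is_popov_form_of M P)"

(* pivot support, with 0-based column indices *)
definition pivot_support :: "'a::field poly mat \<Rightarrow> nat list" where
  "pivot_support M = map (\<lambda>i. pivot_index (row (popov_form M) i)) [0..<dim_row (popov_form M)]"

end

theory Submission
  imports Defs
begin

text \<open>The rows of \<open>A\<close> lie in the left kernel of \<open>K\<close> (since \<open>A K = 0\<close>), which is the row module
  of \<open>R\<close>; hence \<open>row_module A \<subseteq> row_module R\<close>. For a submodule \<open>S\<close> of \<open>K[x]\<^sup>n\<close> let \<open>J\<close>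
  be the set of pivot indices of its nonzero elements. Choosing for each \<open>j \<in> J\<close> the monic
  element of minimal degree with pivot \<open>j\<close>, reduced against the others, gives the Popov form of
  \<open>S\<close>, so the pivot support of every matrix generating \<open>S\<close> is \<open>J\<close> in increasing order. Moreover
  \<open>|J|\<close> is the rank: \<open>M = C P\<close> and \<open>P = U M\<close> for the Popov matrix \<open>P\<close> with \<open>|J|\<close> rows, whose
  columns at the pivots form a nonsingular matrix since each diagonal entry dominates its column
  in degree. So \<open>J(A) \<subseteq> J(R)\<close>, \<open>|J(A)| = r \<ge> |J(R)|\<close> because \<open>R\<close> has \<open>r\<close> rows, and the two
  pivot sets are equal.\<close>

section \<open>Degree bounds and pivots\<close>

definition deg_lt :: "nat \<Rightarrow> 'a::zero poly \<Rightarrow> bool" where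
  "deg_lt E p \<longleftrightarrow> p = 0 \<or> degree p < E"

lemma deg_lt_0 [simp]: "deg_lt E 0"
  by (simp add: deg_lt_def)

lemma deg_lt_Suc_iff: "deg_lt (Suc E) p \<longleftrightarrow> degree p \<le> E"
  unfolding deg_lt_def by auto

lemma deg_lt_mono: "deg_lt E p \<Longrightarrow> E \<le> F \<Longrightarrow> deg_lt F p"
  unfolding deg_lt_def by auto

lemma deg_lt_add: "deg_lt E a \<Longrightarrow> deg_lt E b \<Longrightarrow> deg_lt E (a + (b::'a::ab_group_add poly))"
  unfolding deg_lt_def by (metis add.left_neutral add.right_neutral degree_add_less)

lemma deg_lt_diff: "deg_lt E a \<Longrightarrow> deg_lt E b \<Longrightarrow> deg_lt E (a - (b::'a::ab_group_add poly))"
  unfolding deg_lt_def by (metis degree_diff_less diff_0_right diff_zero degree_minus minus_diff_eq)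

lemma deg_lt_sum:
  "finite S \<Longrightarrow> (\<And>s. s \<in> S \<Longrightarrow> deg_lt E (f s)) \<Longrightarrow> deg_lt E (sum f S :: 'a::ab_group_add poly)"
  by (induction S rule: finite_induct) (auto intro: deg_lt_add)

lemma deg_lt_mult: "deg_lt B p \<Longrightarrow> deg_lt (degree a + B) (a * (p::'a::idom poly))"
  unfolding deg_lt_def
proof (elim disjE)
  assume "degree p < B"
  then show "a * p = 0 \<or> degree (a * p) < degree a + B"
    by (metis add_le_less_mono degree_mult_le le_less_trans order_refl)
qed auto

lemma lead_diff_deg_lt:
  assumes "(a::'a::ab_group_add poly) \<noteq> 0" "deg_lt (degree a) b"
  shows "a - b \<noteq> 0 \<and> degree (a - b) = degree a \<and> lead_coeff (a - b) = lead_coeff a"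
proof (cases "b = 0")
  case False
  then have b: "degree b < degree a" using assms(2) deg_lt_def by auto
  then have "degree (a - b) = degree a"
    using degree_add_eq_left[of "-b" a] by simp
  moreover have "coeff (a - b) (degree a) = coeff a (degree a)"
    using b by (simp add: coeff_eq_0)
  ultimately show ?thesis using assms(1)
    by (metis b degree_0 leading_coeff_0_iff not_less0)
qed (use assms in auto)

lemma degree_add_deg_lt:
  assumes "(a::'a::ab_group_add poly) \<noteq> 0" "deg_lt (degree a) b"
  shows "a + b \<noteq> 0 \<and> degree (a + b) = degree a"
proof -
  have "deg_lt (degree a) (-b)" using assms(2) unfolding deg_lt_def by auto
  from lead_diff_deg_lt[OF assms(1) this] show ?thesis by simp
qed

lemma deg_lt_diff_same_lead:
  assumes "degree (a::'a::ab_group_add poly) = degree b" "lead_coeff a = lead_coeff b"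
  shows "deg_lt (degree a) (a - b)"
proof -
  have "degree (a - b) \<le> degree a" using assms degree_diff_le by (metis order_refl)
  moreover have "coeff (a - b) (degree a) = 0" using assms by simp
  ultimately show ?thesis unfolding deg_lt_def
    by (metis le_neq_implies_less leading_coeff_0_iff)
qed

lemma not_deg_lt_diff:
  assumes "deg_lt B (a::'a::ab_group_add poly)" "\<not> deg_lt B (a - b)"
  shows "b \<noteq> 0 \<and> degree (a - b) = degree b \<and> deg_lt (degree b) a"
proof -
  have ab: "a - b \<noteq> 0" "degree (a - b) \<ge> B" using assms(2) unfolding deg_lt_def by auto
  have a: "deg_lt (degree b) a"
  proof (rule ccontr)
    assume "\<not> deg_lt (degree b) a"
    then have "a \<noteq> 0" "degree b \<le> degree a" unfolding deg_lt_def by auto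
    then have "degree (a - b) \<le> degree a" by (simp add: degree_diff_le)
    moreover have "degree a < B" using assms(1) \<open>a \<noteq> 0\<close> deg_lt_def by auto
    ultimately show False using ab by auto
  qed
  have b: "b \<noteq> 0" using assms by auto
  have "degree (b - a) = degree b" using lead_diff_deg_lt[OF b a] by simp
  moreover have "a - b = - (b - a)" by simp
  ultimately show ?thesis using a b by (metis degree_minus)
qed

lemma vec_nonzero_index:
  assumes "v \<in> carrier_vec n" "v \<noteq> 0\<^sub>v n"
  obtains j where "j < n" "v $ j \<noteq> 0"
  using assms by (metis carrier_vecD eq_vecI index_zero_vec(1) index_zero_vec(2))

lemma finite_lex_max:
  fixes f :: "nat \<Rightarrow> nat"
  assumes "finite V" "V \<noteq> {}"
  obtains l where "l \<in> V" "\<And>l'. l' \<in> V \<Longrightarrow> f l' \<le> f l"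
    "\<And>l'. l' \<in> V \<Longrightarrow> f l' = f l \<Longrightarrow> l' \<le> l"
proof -
  define E where "E = Max (f ` V)"
  have "E \<in> f ` V" unfolding E_def using assms by auto
  then have W: "{l \<in> V. f l = E} \<noteq> {}" by auto
  define l where "l = Max {l \<in> V. f l = E}"
  have "l \<in> {l \<in> V. f l = E}" unfolding l_def using assms(1) W by (intro Max_in) auto
  moreover have "\<And>l'. l' \<in> V \<Longrightarrow> f l' = E \<Longrightarrow> l' \<le> l" unfolding l_def using assms(1) by auto
  moreover have "\<And>l'. l' \<in> V \<Longrightarrow> f l' \<le> E" unfolding E_def using assms(1) by auto
  ultimately show thesis using that by auto
qed

lemma lex_encode_less:
  fixes D D' j j' n :: nat
  assumes "D' < D \<or> D' = D \<and> j' < j" "j' < n"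
  shows "D' * n + j' < D * n + j"
proof (cases "D' = D")
  case False
  then have "Suc D' * n \<le> D * n" using assms(1) by (intro mult_le_mono1) auto
  then show ?thesis using assms(2) by auto
qed (use assms in auto)

lemma pivot_index_props:
  fixes v :: "'a::zero poly vec"
  assumes "v \<in> carrier_vec n" "v \<noteq> 0\<^sub>v n"
  shows "pivot_index v < n" "v $ pivot_index v \<noteq> 0"
    "degree (v $ pivot_index v) = vec_deg v"
    "\<And>i. i < n \<Longrightarrow> degree (v $ i) \<le> vec_deg v"
    "\<And>i. i < n \<Longrightarrow> pivot_index v < i \<Longrightarrow> deg_lt (vec_deg v) (v $ i)"
proof -
  have dv: "dim_vec v = n" using assms by auto
  obtain j0 where j0: "j0 < n" "v $ j0 \<noteq> 0" using vec_nonzero_index[OF assms] .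
  let ?D = "{degree (v $ j) | j. j < dim_vec v \<and> v $ j \<noteq> 0}"
  have finD: "finite ?D" by simp
  have Dle: "\<And>i. i < n \<Longrightarrow> v $ i \<noteq> 0 \<Longrightarrow> degree (v $ i) \<le> vec_deg v"
    unfolding vec_deg_def using finD dv by (intro Max_ge) auto
  have "vec_deg v \<in> ?D" unfolding vec_deg_def using finD j0 dv by (intro Max_in) auto
  then obtain j1 where j1: "j1 < n" "v $ j1 \<noteq> 0" "degree (v $ j1) = vec_deg v" using dv by auto
  let ?P = "{j. j < dim_vec v \<and> v $ j \<noteq> 0 \<and> degree (v $ j) = vec_deg v}"
  have finP: "finite ?P" by simp
  have "pivot_index v \<in> ?P" unfolding pivot_index_def using finP j1 dv by (intro Max_in) auto
  then show "pivot_index v < n" "v $ pivot_index v \<noteq> 0"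
    "degree (v $ pivot_index v) = vec_deg v" using dv by auto
  show le: "\<And>i. i < n \<Longrightarrow> degree (v $ i) \<le> vec_deg v"
    using Dle by (metis degree_0 zero_le)
  fix i assume i: "i < n" "pivot_index v < i"
  show "deg_lt (vec_deg v) (v $ i)"
  proof (rule ccontr)
    assume "\<not> deg_lt (vec_deg v) (v $ i)"
    then have "i \<in> ?P" using le[OF i(1)] i dv unfolding deg_lt_def by auto
    then have "i \<le> pivot_index v" unfolding pivot_index_def by (rule Max_ge[OF finP])
    then show False using i by auto
  qed
qed

lemma pivot_index_eqI:
  fixes v :: "'a::zero poly vec"
  assumes "v \<in> carrier_vec n" "j < n" "v $ j \<noteq> 0"
    "\<And>i. i < n \<Longrightarrow> degree (v $ i) \<le> degree (v $ j)"
    "\<And>i. i < n \<Longrightarrow> j < i \<Longrightarrow> deg_lt (degree (v $ j)) (v $ i)"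
  shows "vec_deg v = degree (v $ j)" "pivot_index v = j"
proof -
  have dv: "dim_vec v = n" using assms by auto
  have "Max {degree (v $ j) | j. j < dim_vec v \<and> v $ j \<noteq> 0} = degree (v $ j)"
    by (rule Max_eqI) (use assms dv in auto)
  then show vd: "vec_deg v = degree (v $ j)" unfolding vec_deg_def .
  have "Max {j. j < dim_vec v \<and> v $ j \<noteq> 0 \<and> degree (v $ j) = vec_deg v} = j"
  proof (rule Max_eqI)
    fix y assume "y \<in> {j. j < dim_vec v \<and> v $ j \<noteq> 0 \<and> degree (v $ j) = vec_deg v}"
    then show "y \<le> j" using assms(5)[of y] dv vd unfolding deg_lt_def by (cases "j < y") auto
  qed (use assms dv vd in auto)
  then show "pivot_index v = j" unfolding pivot_index_def .
qed

lemma cancel_pivot_lex_less: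
  fixes s t :: "'a::ab_group_add poly vec"
  assumes s: "s \<in> carrier_vec n" "s \<noteq> 0\<^sub>v n" and t: "t \<in> carrier_vec n" and st: "s - t \<noteq> 0\<^sub>v n"
    and tj: "degree (t $ pivot_index s) = vec_deg s"
      "lead_coeff (t $ pivot_index s) = lead_coeff (s $ pivot_index s)"
    and tle: "\<And>i. i < n \<Longrightarrow> degree (t $ i) \<le> vec_deg s"
    and tlt: "\<And>i. i < n \<Longrightarrow> pivot_index s < i \<Longrightarrow> deg_lt (vec_deg s) (t $ i)"
  shows "vec_deg (s - t) < vec_deg s \<or>
    vec_deg (s - t) = vec_deg s \<and> pivot_index (s - t) < pivot_index s"
proof -
  define j where "j = pivot_index s"
  define D where "D = vec_deg s"
  note sp = pivot_index_props[OF s, folded j_def D_def]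
  have sti: "\<And>i. i < n \<Longrightarrow> (s - t) $ i = s $ i - t $ i" using t by auto
  note stp = pivot_index_props[OF _ st]
  have "deg_lt D ((s - t) $ i)" if "i < n" "j \<le> i" for i
  proof (cases "i = j")
    case True
    then show ?thesis using sti[OF that(1)] deg_lt_diff_same_lead[of "s $ j" "t $ j"] sp(3) tj
      unfolding j_def D_def by simp
  qed (use that sti sp(5) tlt in \<open>auto intro: deg_lt_diff simp: j_def D_def\<close>)
  moreover have "degree ((s - t) $ i) \<le> D" if "i < n" for i
    unfolding sti[OF that] using sp(4)[OF that] tle[OF that] unfolding D_def by (rule degree_diff_le)
  ultimately show ?thesis
    using stp(1-3) s t unfolding j_def[symmetric] D_def[symmetric]
    by (metis carrier_vecD deg_lt_def index_minus_vec(2) carrier_vecI leD linorder_neqE_nat order.order_iff_strict)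
qed

section \<open>Submodules of \<open>K[x]\<^sup>n\<close> and their pivots\<close>

definition poly_submodule :: "nat \<Rightarrow> 'a::field poly vec set \<Rightarrow> bool" where
  "poly_submodule n S \<longleftrightarrow> S \<subseteq> carrier_vec n \<and> 0\<^sub>v n \<in> S \<and> (\<forall>x\<in>S. \<forall>y\<in>S. x + y \<in> S) \<and>
     (\<forall>x\<in>S. \<forall>y\<in>S. x - y \<in> S) \<and> (\<forall>a. \<forall>x\<in>S. a \<cdot>\<^sub>v x \<in> S)"

lemma poly_submoduleD:
  assumes "poly_submodule n S"
  shows "S \<subseteq> carrier_vec n" "0\<^sub>v n \<in> S" "\<And>x y. x \<in> S \<Longrightarrow> y \<in> S \<Longrightarrow> x + y \<in> S"
    "\<And>x y. x \<in> S \<Longrightarrow> y \<in> S \<Longrightarrow> x - y \<in> S" "\<And>a x. x \<in> S \<Longrightarrow> a \<cdot>\<^sub>v x \<in> S"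
  using assms unfolding poly_submodule_def by auto

definition pivot_set :: "nat \<Rightarrow> 'a::field poly vec set \<Rightarrow> nat set" where
  "pivot_set n S = {pivot_index p | p. p \<in> S \<and> p \<noteq> 0\<^sub>v n}"

definition pivot_deg :: "nat \<Rightarrow> 'a::field poly vec set \<Rightarrow> nat \<Rightarrow> nat" where
  "pivot_deg n S j = (LEAST D. \<exists>p\<in>S. p \<noteq> 0\<^sub>v n \<and> pivot_index p = j \<and> vec_deg p = D)"

definition pivot_minimal :: "nat \<Rightarrow> 'a::field poly vec set \<Rightarrow> nat \<Rightarrow> 'a poly vec \<Rightarrow> bool" where
  "pivot_minimal n S j q \<longleftrightarrow> q \<in> S \<and> q \<noteq> 0\<^sub>v n \<and> pivot_index q = j \<and>
     vec_deg q = pivot_deg n S j \<and> lead_coeff (q $ j) = 1"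

text \<open>The rows of the Popov form of \<open>S\<close> are the pivot-reduced vectors, one for each
  \<open>j \<in> pivot_set n S\<close>.\<close>

definition pivot_reduced :: "nat \<Rightarrow> 'a::field poly vec set \<Rightarrow> nat \<Rightarrow> 'a poly vec \<Rightarrow> bool" where
  "pivot_reduced n S j q \<longleftrightarrow>
     pivot_minimal n S j q \<and> (\<forall>l\<in>pivot_set n S. l \<noteq> j \<longrightarrow> deg_lt (pivot_deg n S l) (q $ l))"

lemma pivot_set_subset:
  assumes "poly_submodule n S" shows "pivot_set n S \<subseteq> {..<n}"
proof
  fix j assume "j \<in> pivot_set n S"
  then obtain p where p: "p \<in> S" "p \<noteq> 0\<^sub>v n" "j = pivot_index p" unfolding pivot_set_def by auto
  have "p \<in> carrier_vec n" using p poly_submoduleD(1)[OF assms] by auto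
  then show "j \<in> {..<n}" using pivot_index_props(1)[OF _ p(2)] p(3) by auto
qed

lemma finite_pivot_set: "poly_submodule n S \<Longrightarrow> finite (pivot_set n S)"
  using pivot_set_subset finite_subset by blast

lemma pivot_index_in_pivot_set: "p \<in> S \<Longrightarrow> p \<noteq> 0\<^sub>v n \<Longrightarrow> pivot_index p \<in> pivot_set n S"
  unfolding pivot_set_def by auto

lemma pivot_deg_le:
  assumes "p \<in> S" "p \<noteq> 0\<^sub>v n"
  shows "pivot_deg n S (pivot_index p) \<le> vec_deg p"
  unfolding pivot_deg_def by (rule Least_le) (use assms in auto)

lemma pivot_set_mono: "S \<subseteq> T \<Longrightarrow> pivot_set n S \<subseteq> pivot_set n T"
  unfolding pivot_set_def by blast

lemma pivot_minimal_props:
  assumes "poly_submodule n S" "pivot_minimal n S j q"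
  shows "q \<in> carrier_vec n" "j < n" "q $ j \<noteq> 0" "degree (q $ j) = pivot_deg n S j"
    "\<And>i. i < n \<Longrightarrow> degree (q $ i) \<le> pivot_deg n S j"
    "\<And>i. i < n \<Longrightarrow> j < i \<Longrightarrow> deg_lt (pivot_deg n S j) (q $ i)" "j \<in> pivot_set n S" "q \<in> S"
    "lead_coeff (q $ j) = 1"
proof -
  have q: "q \<in> S" "q \<noteq> 0\<^sub>v n" "pivot_index q = j" "vec_deg q = pivot_deg n S j"
    "lead_coeff (q $ j) = 1"
    using assms(2) unfolding pivot_minimal_def by auto
  show qc: "q \<in> carrier_vec n" using q poly_submoduleD(1)[OF assms(1)] by auto
  show "j \<in> pivot_set n S" using pivot_index_in_pivot_set[OF q(1,2)] q(3) by simp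
  show "j < n" "q $ j \<noteq> 0" "degree (q $ j) = pivot_deg n S j"
    "\<And>i. i < n \<Longrightarrow> degree (q $ i) \<le> pivot_deg n S j"
    "\<And>i. i < n \<Longrightarrow> j < i \<Longrightarrow> deg_lt (pivot_deg n S j) (q $ i)" "q \<in> S" "lead_coeff (q $ j) = 1"
    using pivot_index_props[OF qc q(2), unfolded q(3,4)] q by auto
qed

lemma pivot_minimal_exists:
  assumes "poly_submodule n S" "j \<in> pivot_set n S"
  obtains q where "pivot_minimal n S j q"
proof -
  have "\<exists>D. \<exists>p\<in>S. p \<noteq> 0\<^sub>v n \<and> pivot_index p = j \<and> vec_deg p = D"
    using assms(2) unfolding pivot_set_def by auto
  from LeastI_ex[OF this] obtain p where p: "p \<in> S" "p \<noteq> 0\<^sub>v n" "pivot_index p = j"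
    "vec_deg p = pivot_deg n S j" unfolding pivot_deg_def by blast
  have pc: "p \<in> carrier_vec n" using p poly_submoduleD(1)[OF assms(1)] by auto
  note pp = pivot_index_props[OF pc p(2), unfolded p(3,4)]
  define a where "a = inverse (lead_coeff (p $ j))"
  have a0: "a \<noteq> 0" unfolding a_def using pp(2) by simp
  define q where "q = [:a:] \<cdot>\<^sub>v p"
  have qc: "q \<in> carrier_vec n" unfolding q_def using pc by auto
  have qi: "\<And>i. i < n \<Longrightarrow> q $ i = Polynomial.smult a (p $ i)" unfolding q_def using pc by auto
  have qj: "q $ j \<noteq> 0" "degree (q $ j) = pivot_deg n S j" using qi[OF pp(1)] pp a0 by auto
  have "vec_deg q = degree (q $ j) \<and> pivot_index q = j"
    using pivot_index_eqI[OF qc pp(1) qj(1)] qi pp a0 qj by (auto simp: deg_lt_def)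
  moreover have "q \<in> S" unfolding q_def using poly_submoduleD(5)[OF assms(1) p(1)] .
  moreover have "q \<noteq> 0\<^sub>v n" using qj(1) pp(1) by auto
  moreover have "lead_coeff (q $ j) = 1" using qi[OF pp(1)] a0 pp(2) by (simp add: a_def)
  ultimately have "pivot_minimal n S j q" using qj unfolding pivot_minimal_def by auto
  then show thesis by (rule that)
qed

lemma pivot_minimal_lead_multiple:
  assumes S: "poly_submodule n S" and p: "pivot_minimal n S l p"
    and a: "a \<noteq> 0" "pivot_deg n S l \<le> degree a"
  obtains m t where "t = m \<cdot>\<^sub>v p" "t \<in> S" "t \<in> carrier_vec n"
    "degree (t $ l) = degree a" "lead_coeff (t $ l) = lead_coeff a"
    "\<And>i. i < n \<Longrightarrow> degree (t $ i) \<le> degree a"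
    "\<And>i. i < n \<Longrightarrow> l < i \<Longrightarrow> deg_lt (degree a) (t $ i)"
proof -
  note pp = pivot_minimal_props[OF S p]
  define e where "e = degree a - pivot_deg n S l"
  define m where "m = monom (lead_coeff a) e"
  have dm: "degree m = e" using a(1) by (simp add: m_def degree_monom_eq)
  have eD: "e + pivot_deg n S l = degree a" unfolding e_def using a(2) by simp
  define t where "t = m \<cdot>\<^sub>v p"
  have ti: "\<And>i. i < n \<Longrightarrow> t $ i = m * p $ i" unfolding t_def using pp(1) by auto
  show thesis
  proof (rule that[OF t_def])
    show "t \<in> S" unfolding t_def by (rule poly_submoduleD(5)[OF S pp(8)])
    show "t \<in> carrier_vec n" unfolding t_def using pp(1) by auto
    have tl: "t $ l = m * p $ l" using ti[OF pp(2)] .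
    have "m \<noteq> 0" using a(1) by (simp add: m_def)
    then show "degree (t $ l) = degree a" unfolding tl using pp(3,4) dm eD by (simp add: degree_mult_eq)
    show "lead_coeff (t $ l) = lead_coeff a" unfolding tl lead_coeff_mult using pp(9) dm
      by (simp add: m_def)
    fix i assume i: "i < n"
    have "deg_lt (Suc (pivot_deg n S l)) (p $ i)" using pp(5)[OF i] deg_lt_Suc_iff by auto
    then have "deg_lt (Suc (degree a)) (t $ i)"
      using deg_lt_mult[of _ "p $ i" m] ti[OF i] dm eD by (metis add_Suc_right)
    then show "degree (t $ i) \<le> degree a" by (simp add: deg_lt_Suc_iff)
    show "l < i \<Longrightarrow> deg_lt (degree a) (t $ i)"
      using deg_lt_mult[OF pp(6)[OF i], of m] ti[OF i] dm eD by simp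
  qed
qed

lemma pivot_minimal_generate:
  assumes S: "poly_submodule n S" and T: "poly_submodule n T"
    and gen: "\<And>j. j \<in> pivot_set n S \<Longrightarrow> \<exists>q\<in>T. pivot_minimal n S j q"
  shows "S \<subseteq> T"
proof -
  have "s \<in> T" if "s \<in> S" "vec_deg s * n + pivot_index s = N" for s N
    using that
  proof (induction N arbitrary: s rule: less_induct)
    case (less N s)
    show ?case
    proof (cases "s = 0\<^sub>v n")
      case True then show ?thesis using poly_submoduleD(2)[OF T] by simp
    next
      case False
      have sc: "s \<in> carrier_vec n" using less.prems(1) poly_submoduleD(1)[OF S] by auto
      note sp = pivot_index_props[OF sc False]
      obtain q where q: "q \<in> T" "pivot_minimal n S (pivot_index s) q"
        using gen[OF pivot_index_in_pivot_set[OF less.prems(1) False]] by blast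
      have "pivot_deg n S (pivot_index s) \<le> degree (s $ pivot_index s)"
        using pivot_deg_le[OF less.prems(1) False] sp(3) by simp
      then obtain m t where t: "t = m \<cdot>\<^sub>v q" "t \<in> S" "t \<in> carrier_vec n"
        "degree (t $ pivot_index s) = vec_deg s" "lead_coeff (t $ pivot_index s) = lead_coeff (s $ pivot_index s)"
        "\<And>i. i < n \<Longrightarrow> degree (t $ i) \<le> vec_deg s"
        "\<And>i. i < n \<Longrightarrow> pivot_index s < i \<Longrightarrow> deg_lt (vec_deg s) (t $ i)"
        using pivot_minimal_lead_multiple[OF S q(2) sp(2)] sp(3) by metis
      have "s - t \<in> T"
      proof (cases "s - t = 0\<^sub>v n")
        case True then show ?thesis using poly_submoduleD(2)[OF T] by simp
      next
        case False
        have "s - t \<in> carrier_vec n" using sc t(3) by auto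
        then have "pivot_index (s - t) < n" using pivot_index_props(1)[OF _ False] by simp
        then have "vec_deg (s - t) * n + pivot_index (s - t) < N"
          using cancel_pivot_lex_less[OF sc \<open>s \<noteq> 0\<^sub>v n\<close> t(3) False t(4-7)] lex_encode_less
            less.prems(2) by blast
        then show ?thesis using less.IH poly_submoduleD(4)[OF S less.prems(1) t(2)] by blast
      qed
      moreover have "s = (s - t) + t" using sc t(3) by (intro eq_vecI) auto
      ultimately show ?thesis using poly_submoduleD(3)[OF T] poly_submoduleD(5)[OF T q(1)] t(1) by metis
    qed
  qed
  then show ?thesis by blast
qed

lemma deg_lt_pivot_degs_imp_zero:
  assumes "poly_submodule n S" "r \<in> S" "\<And>l. l \<in> pivot_set n S \<Longrightarrow> deg_lt (pivot_deg n S l) (r $ l)"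
  shows "r = 0\<^sub>v n"
proof (rule ccontr)
  assume r0: "r \<noteq> 0\<^sub>v n"
  have rc: "r \<in> carrier_vec n" using assms poly_submoduleD(1) by auto
  note rp = pivot_index_props[OF rc r0]
  have "deg_lt (pivot_deg n S (pivot_index r)) (r $ pivot_index r)"
    using assms(3) pivot_index_in_pivot_set[OF assms(2) r0] .
  moreover have "pivot_deg n S (pivot_index r) \<le> vec_deg r" using pivot_deg_le[OF assms(2) r0] .
  ultimately show False using rp(2,3) unfolding deg_lt_def by auto
qed

lemma pivot_reduced_unique:
  assumes S: "poly_submodule n S" and q: "pivot_reduced n S j q" and q': "pivot_reduced n S j q'"
  shows "q = q'"
proof -
  have "pivot_minimal n S j q" "pivot_minimal n S j q'"
    using q q' unfolding pivot_reduced_def by auto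
  note p = pivot_minimal_props[OF S this(1)] and p' = pivot_minimal_props[OF S this(2)]
  have "deg_lt (pivot_deg n S l) ((q - q') $ l)" if l: "l \<in> pivot_set n S" for l
  proof -
    have "(q - q') $ l = q $ l - q' $ l" using p(1) p'(1) l pivot_set_subset[OF S] by auto
    then show ?thesis
      using deg_lt_diff_same_lead[of "q $ j" "q' $ j"] p(4,9) p'(4,9) q q' l
      unfolding pivot_reduced_def by (cases "l = j") (auto intro: deg_lt_diff)
  qed
  then have "q - q' = 0\<^sub>v n"
    using deg_lt_pivot_degs_imp_zero[OF S poly_submoduleD(4)[OF S p(8) p'(8)]] by blast
  then show ?thesis using p(1) p'(1) by (metis eq_vecI carrier_vecD index_minus_vec index_zero_vec
      right_minus_eq)
qed

definition violations :: "nat \<Rightarrow> 'a::field poly vec set \<Rightarrow> nat \<Rightarrow> 'a poly vec \<Rightarrow> nat set" where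
  "violations n S j q = {l \<in> pivot_set n S. l \<noteq> j \<and> \<not> deg_lt (pivot_deg n S l) (q $ l)}"

text \<open>Encodes the lexicographically largest pair (degree, position) of a violating entry as a
  natural number; \<open>0\<close> if there is none.\<close>

definition violation_measure :: "nat \<Rightarrow> 'a::field poly vec set \<Rightarrow> nat \<Rightarrow> 'a poly vec \<Rightarrow> nat" where
  "violation_measure n S j q =
     Max (insert 0 ((\<lambda>l. Suc (degree (q $ l) * n + l)) ` violations n S j q))"

lemma pivot_minimal_diff:
  assumes S: "poly_submodule n S" and q: "pivot_minimal n S j q"
    and t: "t \<in> S" "t \<in> carrier_vec n"
    and le: "\<And>i. i < n \<Longrightarrow> degree (t $ i) \<le> pivot_deg n S j"
    and lt: "\<And>i. i < n \<Longrightarrow> j \<le> i \<Longrightarrow> deg_lt (pivot_deg n S j) (t $ i)"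
  shows "pivot_minimal n S j (q - t)"
proof -
  note qp = pivot_minimal_props[OF S q]
  have qti: "\<And>i. i < n \<Longrightarrow> (q - t) $ i = q $ i - t $ i" using t(2) by auto
  have qtc: "q - t \<in> carrier_vec n" using qp(1) t(2) by auto
  have qtj: "(q - t) $ j \<noteq> 0" "degree ((q - t) $ j) = pivot_deg n S j" "lead_coeff ((q - t) $ j) = 1"
    using lead_diff_deg_lt[OF qp(3), of "t $ j"] lt[OF qp(2)] qp(4,9) qti[OF qp(2)] by auto
  have "degree ((q - t) $ i) \<le> degree ((q - t) $ j)" if "i < n" for i
    unfolding qtj(2) qti[OF that] using qp(5)[OF that] le[OF that] by (rule degree_diff_le)
  moreover have "deg_lt (degree ((q - t) $ j)) ((q - t) $ i)" if "i < n" "j < i" for i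
    unfolding qtj(2) qti[OF that(1)] using qp(6)[OF that] lt[OF that(1)] that(2)
    by (auto intro: deg_lt_diff)
  ultimately have "vec_deg (q - t) = pivot_deg n S j" "pivot_index (q - t) = j"
    using pivot_index_eqI[OF qtc qp(2) qtj(1)] qtj(2) by auto
  moreover have "q - t \<noteq> 0\<^sub>v n" using qtj(1) qp(2) by auto
  ultimately show ?thesis
    unfolding pivot_minimal_def using poly_submoduleD(4)[OF S qp(8) t(1)] qtj(3) by auto
qed

lemma violation_measure_less:
  assumes S: "poly_submodule n S" and l: "l \<in> violations n S j q"
    and less: "\<And>l'. l' \<in> violations n S j q' \<Longrightarrow>
      degree (q' $ l') * n + l' < degree (q $ l) * n + l"
  shows "violation_measure n S j q' < violation_measure n S j q"
proof -
  have fin: "\<And>q. finite (violations n S j q)"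
    using finite_pivot_set[OF S] unfolding violations_def by auto
  have "violation_measure n S j q' < Suc (degree (q $ l) * n + l)"
    unfolding violation_measure_def using fin less by (subst Max_less_iff) auto
  also have "\<dots> \<le> violation_measure n S j q"
    unfolding violation_measure_def using fin l by (intro Max_ge) auto
  finally show ?thesis .
qed

lemma violations_diff_lex_less:
  assumes S: "poly_submodule n S" and t: "t \<in> carrier_vec n"
    and l: "l \<in> violations n S j q"
    and lmax: "\<And>l'. l' \<in> violations n S j q \<Longrightarrow> degree (q $ l') \<le> degree (q $ l)"
    and llast: "\<And>l'. l' \<in> violations n S j q \<Longrightarrow> degree (q $ l') = degree (q $ l) \<Longrightarrow> l' \<le> l"
    and tl: "degree (t $ l) = degree (q $ l)" "lead_coeff (t $ l) = lead_coeff (q $ l)"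
    and tle: "\<And>i. i < n \<Longrightarrow> degree (t $ i) \<le> degree (q $ l)"
    and tlt: "\<And>i. i < n \<Longrightarrow> l < i \<Longrightarrow> deg_lt (degree (q $ l)) (t $ i)"
    and l': "l' \<in> violations n S j (q - t)"
  shows "degree ((q - t) $ l') * n + l' < degree (q $ l) * n + l"
proof -
  define \<delta> where "\<delta> = degree (q $ l)"
  have Vn: "\<And>q. violations n S j q \<subseteq> {..<n}"
    using pivot_set_subset[OF S] unfolding violations_def by auto
  have ln: "l < n" and l'n: "l' < n" using l l' Vn by auto
  have qti: "\<And>i. i < n \<Longrightarrow> (q - t) $ i = q $ i - t $ i" using t by auto
  have l'J: "\<not> deg_lt (pivot_deg n S l') ((q - t) $ l')" using l' unfolding violations_def by auto
  then have nz: "(q - t) $ l' \<noteq> 0" by auto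
  have "degree ((q - t) $ l') < \<delta> \<or> degree ((q - t) $ l') = \<delta> \<and> l' < l"
  proof (cases "l' \<in> violations n S j q")
    case True
    have le: "degree ((q - t) $ l') \<le> \<delta>"
      unfolding qti[OF l'n] \<delta>_def using lmax[OF True] tle[OF l'n] by (rule degree_diff_le)
    have "l' < l" if eq: "degree ((q - t) $ l') = \<delta>"
    proof (rule ccontr)
      assume "\<not> l' < l"
      then consider "l' = l" | "l < l'" by linarith
      then show False
      proof cases
        case 1
        have "deg_lt \<delta> ((q - t) $ l)"
          unfolding qti[OF ln] \<delta>_def using deg_lt_diff_same_lead[of "q $ l" "t $ l"] tl by simp
        then show False using 1 eq nz unfolding deg_lt_def by auto
      next
        case 2
        have "degree (q $ l') \<noteq> \<delta>" using llast[OF True] 2 unfolding \<delta>_def by fastforce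
        then have "deg_lt \<delta> (q $ l')" using lmax[OF True] unfolding \<delta>_def deg_lt_def by auto
        then have "deg_lt \<delta> ((q - t) $ l')"
          unfolding qti[OF l'n] using tlt[OF l'n 2] unfolding \<delta>_def by (rule deg_lt_diff)
        then show False using eq nz unfolding deg_lt_def by auto
      qed
    qed
    then show ?thesis using le by linarith
  next
    case False
    then have "deg_lt (pivot_deg n S l') (q $ l')" using l' unfolding violations_def by auto
    from not_deg_lt_diff[OF this l'J[unfolded qti[OF l'n]]]
    have tl': "t $ l' \<noteq> 0" "degree ((q - t) $ l') = degree (t $ l')" using qti[OF l'n] by auto
    have "l' \<noteq> l" using False l by auto
    then have "degree ((q - t) $ l') = \<delta> \<Longrightarrow> l' < l"
      using tlt[OF l'n] tl' unfolding \<delta>_def deg_lt_def by fastforce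
    then show ?thesis using tle[OF l'n] tl'(2) unfolding \<delta>_def by linarith
  qed
  then show ?thesis using lex_encode_less[OF _ l'n] unfolding \<delta>_def by blast
qed

lemma pivot_minimal_reduce:
  assumes S: "poly_submodule n S" and q: "pivot_minimal n S j q" and V: "violations n S j q \<noteq> {}"
  obtains q' where "pivot_minimal n S j q'" "violation_measure n S j q' < violation_measure n S j q"
proof -
  note qp = pivot_minimal_props[OF S q]
  have "finite (violations n S j q)"
    using finite_pivot_set[OF S] unfolding violations_def by auto
  then obtain l where l: "l \<in> violations n S j q"
    and lmax: "\<And>l'. l' \<in> violations n S j q \<Longrightarrow> degree (q $ l') \<le> degree (q $ l)"
    and llast: "\<And>l'. l' \<in> violations n S j q \<Longrightarrow> degree (q $ l') = degree (q $ l) \<Longrightarrow> l' \<le> l"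
    using finite_lex_max[OF _ V, where f = "\<lambda>l. degree (q $ l)"] by blast
  have lJ: "l \<in> pivot_set n S" "l \<noteq> j" "\<not> deg_lt (pivot_deg n S l) (q $ l)"
    using l unfolding violations_def by auto
  have ln: "l < n" using lJ(1) pivot_set_subset[OF S] by auto
  have ql0: "q $ l \<noteq> 0" using lJ(3) by auto
  have dl: "pivot_deg n S l \<le> degree (q $ l)" using lJ(3) unfolding deg_lt_def by auto
  obtain p where p: "pivot_minimal n S l p" using pivot_minimal_exists[OF S lJ(1)] .
  obtain m t where t: "t = m \<cdot>\<^sub>v p" "t \<in> S" "t \<in> carrier_vec n"
      "degree (t $ l) = degree (q $ l)" "lead_coeff (t $ l) = lead_coeff (q $ l)"
      "\<And>i. i < n \<Longrightarrow> degree (t $ i) \<le> degree (q $ l)"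
      "\<And>i. i < n \<Longrightarrow> l < i \<Longrightarrow> deg_lt (degree (q $ l)) (t $ i)"
    using pivot_minimal_lead_multiple[OF S p ql0 dl] by metis
  have "deg_lt (pivot_deg n S j) (t $ i)" if "i < n" "j \<le> i" for i
  proof (cases "l < j")
    case True
    then show ?thesis using t(7)[OF that(1)] that(2) qp(5)[OF ln] by (auto intro: deg_lt_mono)
  next
    case False
    then have "deg_lt (pivot_deg n S j) (q $ l)" using qp(6)[OF ln] lJ(2) by auto
    then have "degree (q $ l) < pivot_deg n S j" using ql0 unfolding deg_lt_def by auto
    then show ?thesis using t(6)[OF that(1)] unfolding deg_lt_def by auto
  qed
  then have "pivot_minimal n S j (q - t)"
    using pivot_minimal_diff[OF S q t(2,3)] t(6) qp(5)[OF ln] order.trans by blast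
  moreover have "violation_measure n S j (q - t) < violation_measure n S j q"
    using violation_measure_less[OF S l]
      violations_diff_lex_less[OF S t(3) l lmax llast t(4,5) t(6,7)] by blast
  ultimately show thesis by (rule that)
qed

lemma pivot_reduced_exists:
  assumes S: "poly_submodule n S" and j: "j \<in> pivot_set n S"
  obtains q where "pivot_reduced n S j q"
proof -
  obtain q0 where "pivot_minimal n S j q0" using pivot_minimal_exists[OF S j] .
  then obtain q where q: "pivot_minimal n S j q"
    and qmin: "\<And>y. pivot_minimal n S j y \<Longrightarrow> violation_measure n S j q \<le> violation_measure n S j y"
    using ex_has_least_nat[of "pivot_minimal n S j" q0 "violation_measure n S j"] by blast
  have "violations n S j q = {}"
  proof (rule ccontr)
    assume "violations n S j q \<noteq> {}"
    then obtain q' where "pivot_minimal n S j q'" "violation_measure n S j q' < violation_measure n S j q"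
      using pivot_minimal_reduce[OF S q] by blast
    then show False using qmin by fastforce
  qed
  then show thesis using q that unfolding pivot_reduced_def violations_def by blast
qed

section \<open>Row modules and Popov matrices\<close>

lemma mult_mat_vec_smult_comm:
  assumes "(A::'a::comm_ring mat) \<in> carrier_mat nr nc" "v \<in> carrier_vec nc"
  shows "A *\<^sub>v (k \<cdot>\<^sub>v v) = k \<cdot>\<^sub>v (A *\<^sub>v v)"
  using assms by (intro eq_vecI) (auto simp: scalar_prod_smult_right)

lemma transpose_mult_vec_index:
  fixes P :: "'a::comm_ring mat"
  assumes "c \<in> carrier_vec (dim_row P)" "l < dim_col P"
  shows "(transpose_mat P *\<^sub>v c) $ l = (\<Sum>i<dim_row P. c $ i * P $$ (i, l))"
  using assms by (auto simp: scalar_prod_def mult.commute intro!: sum.cong)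

lemma poly_submodule_row_module: "poly_submodule (dim_col M) (row_module (M::'a::field poly mat))"
proof -
  have MT: "transpose_mat M \<in> carrier_mat (dim_col M) (dim_row M)" by auto
  show ?thesis unfolding poly_submodule_def
  proof (intro conjI ballI allI)
    show "row_module M \<subseteq> carrier_vec (dim_col M)"
      unfolding row_module_def by (auto intro!: carrier_vecI)
    show "0\<^sub>v (dim_col M) \<in> row_module M" unfolding row_module_def
      by (rule CollectI, rule exI[of _ "0\<^sub>v (dim_row M)"]) (auto intro!: eq_vecI)
    fix x y assume "x \<in> row_module M" "y \<in> row_module M"
    then obtain c d where c: "c \<in> carrier_vec (dim_row M)" "x = transpose_mat M *\<^sub>v c"
      and d: "d \<in> carrier_vec (dim_row M)" "y = transpose_mat M *\<^sub>v d"
      unfolding row_module_def by auto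
    show "x + y \<in> row_module M" unfolding row_module_def
      by (rule CollectI, rule exI[of _ "c + d"])
        (use c d MT mult_add_distrib_mat_vec[OF MT c(1) d(1)] in auto)
    show "x - y \<in> row_module M" unfolding row_module_def
      by (rule CollectI, rule exI[of _ "c - d"])
        (use c d MT mult_minus_distrib_mat_vec[OF MT c(1) d(1)] in auto)
  next
    fix a x assume "x \<in> row_module M"
    then obtain c where c: "c \<in> carrier_vec (dim_row M)" "x = transpose_mat M *\<^sub>v c"
      unfolding row_module_def by auto
    show "a \<cdot>\<^sub>v x \<in> row_module M" unfolding row_module_def
      by (rule CollectI, rule exI[of _ "a \<cdot>\<^sub>v c"]) (use c MT in \<open>auto simp: mult_mat_vec_smult_comm\<close>)
  qed
qed

lemma row_in_row_module:
  assumes "i < dim_row M"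
  shows "row M i \<in> row_module M"
proof -
  have "row M i = transpose_mat M *\<^sub>v unit_vec (dim_row M) i"
    using assms by (intro eq_vecI) auto
  then show ?thesis unfolding row_module_def by auto
qed

lemma rows_in_row_module_factor:
  fixes P M :: "'a::field poly mat"
  assumes "dim_col P = dim_col M" "\<And>i. i < dim_row P \<Longrightarrow> row P i \<in> row_module M"
  obtains U where "U \<in> carrier_mat (dim_row P) (dim_row M)" "P = U * M"
proof -
  have "\<forall>i. \<exists>c. i < dim_row P \<longrightarrow> c \<in> carrier_vec (dim_row M) \<and> row P i = transpose_mat M *\<^sub>v c"
    using assms(2) unfolding row_module_def by blast
  then obtain u where u: "\<And>i. i < dim_row P \<Longrightarrow>
      u i \<in> carrier_vec (dim_row M) \<and> row P i = transpose_mat M *\<^sub>v u i"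
    by metis
  define U where "U = mat (dim_row P) (dim_row M) (\<lambda>(i, t). u i $ t)"
  have U: "U \<in> carrier_mat (dim_row P) (dim_row M)" unfolding U_def by auto
  have rU: "row U i = u i" if "i < dim_row P" for i
    unfolding U_def using that u[OF that] by (intro eq_vecI) auto
  have "P = U * M"
  proof (rule eq_matI)
    fix i l assume "i < dim_row (U * M)" "l < dim_col (U * M)"
    then have i: "i < dim_row P" and l: "l < dim_col M" using U by auto
    have "P $$ (i, l) = row P i $ l" using i l assms(1) by auto
    also have "\<dots> = (transpose_mat M *\<^sub>v u i) $ l" using u[OF i] by simp
    also have "\<dots> = col M l \<bullet> u i" using l by auto
    also have "\<dots> = u i \<bullet> col M l" using u[OF i] by (intro comm_scalar_prod[of _ "dim_row M"]) auto
    also have "\<dots> = (U * M) $$ (i, l)" using i l U rU[OF i] by (simp add: index_mult_mat)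
    finally show "P $$ (i, l) = (U * M) $$ (i, l)" .
  qed (use U assms(1) in auto)
  then show thesis using U that by blast
qed

lemma row_module_subset:
  fixes P M :: "'a::field poly mat"
  assumes "dim_col P = dim_col M" "\<And>i. i < dim_row P \<Longrightarrow> row P i \<in> row_module M"
  shows "row_module P \<subseteq> row_module M"
proof
  obtain U where U: "U \<in> carrier_mat (dim_row P) (dim_row M)" "P = U * M"
    using rows_in_row_module_factor[OF assms] .
  fix x assume "x \<in> row_module P"
  then obtain c where c: "c \<in> carrier_vec (dim_row P)" "x = transpose_mat P *\<^sub>v c"
    unfolding row_module_def by auto
  have "transpose_mat P = transpose_mat M * transpose_mat U"
    using U transpose_mult[OF U(1), of M "dim_col M"] by simp
  then have "x = transpose_mat M *\<^sub>v (transpose_mat U *\<^sub>v c)"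
    using c U(1) by (simp add: assoc_mult_mat_vec[of _ "dim_col M" "dim_row M" _ "dim_row P"])
  moreover have "transpose_mat U *\<^sub>v c \<in> carrier_vec (dim_row M)" using U(1) by (intro carrier_vecI) simp
  ultimately show "x \<in> row_module M" unfolding row_module_def by auto
qed

lemma is_popov_rowD:
  assumes "is_popov P" "i < dim_row P"
  shows "row P i \<in> carrier_vec (dim_col P)" "row P i \<noteq> 0\<^sub>v (dim_col P)"
  using assms unfolding is_popov_def by auto

lemma is_popov_pivot_less:
  assumes "is_popov P" "i < i'" "i' < dim_row P"
  shows "pivot_index (row P i) < pivot_index (row P i')"
  using assms unfolding is_popov_def by auto

lemma is_popov_pivot_inj:
  assumes "is_popov P" "i < dim_row P" "i' < dim_row P" "pivot_index (row P i) = pivot_index (row P i')"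
  shows "i = i'"
  using is_popov_pivot_less[OF assms(1)] assms(2-4) by (metis nat_neq_iff)

lemma is_popov_entry_props:
  assumes P: "is_popov P" and i: "i < dim_row P"
  shows "pivot_index (row P i) < dim_col P" "P $$ (i, pivot_index (row P i)) \<noteq> 0"
    "degree (P $$ (i, pivot_index (row P i))) = vec_deg (row P i)"
    "\<And>l. l < dim_col P \<Longrightarrow> degree (P $$ (i, l)) \<le> vec_deg (row P i)"
    "\<And>l. l < dim_col P \<Longrightarrow> pivot_index (row P i) < l \<Longrightarrow> deg_lt (vec_deg (row P i)) (P $$ (i, l))"
  using pivot_index_props[OF is_popov_rowD[OF P i]] i by auto

text \<open>Here \<open>i0\<close> is the last row maximising \<open>degree (c $ i) + vec_deg (row P i) = E\<close> in the
  combination \<open>\<Sum>i. c $ i \<cdot> row P i\<close>. From the pivot of row \<open>i0\<close> onwards only row \<open>i0\<close> can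
  reach degree \<open>E\<close>, because the other maximising rows have their pivots further left.\<close>

lemma popov_comb_term_bounds:
  fixes P :: "'a::field poly mat"
  assumes P: "is_popov P" and i0: "i0 < dim_row P"
    and fmax: "\<And>i. i < dim_row P \<Longrightarrow> c $ i \<noteq> 0 \<Longrightarrow> degree (c $ i) + vec_deg (row P i) \<le> E"
    and flast: "\<And>i. i < dim_row P \<Longrightarrow> c $ i \<noteq> 0 \<Longrightarrow> degree (c $ i) + vec_deg (row P i) = E \<Longrightarrow> i \<le> i0"
    and i: "i < dim_row P" and l: "l < dim_col P"
  shows "deg_lt (Suc E) (c $ i * P $$ (i, l))"
    and "i \<noteq> i0 \<Longrightarrow> pivot_index (row P i0) \<le> l \<Longrightarrow> deg_lt E (c $ i * P $$ (i, l))"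
proof -
  note entry = is_popov_entry_props[OF P i]
  have le: "deg_lt (Suc (vec_deg (row P i))) (P $$ (i, l))" using entry(4)[OF l] deg_lt_Suc_iff by auto
  show "deg_lt (Suc E) (c $ i * P $$ (i, l))"
  proof (cases "c $ i = 0")
    case False
    from deg_lt_mult[OF le, of "c $ i"] show ?thesis
      by (rule deg_lt_mono) (use fmax[OF i False] in simp)
  qed simp
  show "deg_lt E (c $ i * P $$ (i, l))" if ii0: "i \<noteq> i0" and lj: "pivot_index (row P i0) \<le> l"
  proof (cases "c $ i = 0")
    case c: False
    show ?thesis
    proof (cases "degree (c $ i) + vec_deg (row P i) = E")
      case True
      have "i < i0" using le_neq_implies_less[OF flast[OF i c True] ii0] .
      have "pivot_index (row P i) < l"
        using is_popov_pivot_less[OF P \<open>i < i0\<close> i0] lj by (rule less_le_trans)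
      from deg_lt_mult[OF entry(5)[OF l this], of "c $ i"] show ?thesis using True by simp
    next
      case False
      then have "degree (c $ i) + vec_deg (row P i) < E" using fmax[OF i c] by auto
      then show ?thesis by (intro deg_lt_mono[OF deg_lt_mult[OF le, of "c $ i"]]) simp
    qed
  qed simp
qed

lemma popov_predictable_pivot:
  fixes P :: "'a::field poly mat"
  assumes P: "is_popov P" and c: "c \<in> carrier_vec (dim_row P)" "c \<noteq> 0\<^sub>v (dim_row P)"
  defines "s \<equiv> transpose_mat P *\<^sub>v c"
  obtains i0 where "i0 < dim_row P" "c $ i0 \<noteq> 0" "s \<noteq> 0\<^sub>v (dim_col P)"
     "pivot_index s = pivot_index (row P i0)" "vec_deg s = degree (c $ i0) + vec_deg (row P i0)"
proof -
  define k where "k = dim_row P"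
  define n where "n = dim_col P"
  define I where "I = {i. i < k \<and> c $ i \<noteq> 0}"
  obtain j where "j < k" "c $ j \<noteq> 0" using vec_nonzero_index[OF c] unfolding k_def .
  then have "I \<noteq> {}" unfolding I_def by auto
  moreover have "finite I" unfolding I_def by auto
  ultimately obtain i0 where "i0 \<in> I"
    and fmax: "\<And>i. i \<in> I \<Longrightarrow> degree (c $ i) + vec_deg (row P i) \<le> degree (c $ i0) + vec_deg (row P i0)"
    and flast: "\<And>i. i \<in> I \<Longrightarrow> degree (c $ i) + vec_deg (row P i) = degree (c $ i0) + vec_deg (row P i0)
      \<Longrightarrow> i \<le> i0"
    using finite_lex_max[where f = "\<lambda>i. degree (c $ i) + vec_deg (row P i)"] by blast
  then have i0: "i0 < k" "c $ i0 \<noteq> 0" unfolding I_def by auto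
  define E where "E = degree (c $ i0) + vec_deg (row P i0)"
  define j0 where "j0 = pivot_index (row P i0)"
  have Emax: "degree (c $ i) + vec_deg (row P i) \<le> E" if "i < dim_row P" "c $ i \<noteq> 0" for i
    using fmax that unfolding I_def E_def k_def by blast
  have Elast: "i \<le> i0" if "i < dim_row P" "c $ i \<noteq> 0" "degree (c $ i) + vec_deg (row P i) = E" for i
    using flast that unfolding I_def E_def k_def by blast
  note bound = popov_comb_term_bounds[OF P i0(1)[unfolded k_def] Emax Elast, folded k_def n_def j0_def]
  note entry0 = is_popov_entry_props[OF P i0(1)[unfolded k_def], folded n_def j0_def E_def]
  have si: "\<And>l. l < n \<Longrightarrow> s $ l = (\<Sum>i<k. c $ i * P $$ (i, l))"
    unfolding s_def k_def n_def using c(1) by (intro transpose_mult_vec_index) auto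
  have sc: "s \<in> carrier_vec n" unfolding s_def n_def by (intro carrier_vecI) simp
  have split: "s $ l = c $ i0 * P $$ (i0, l) + (\<Sum>i\<in>{..<k} - {i0}. c $ i * P $$ (i, l))" if "l < n" for l
    using si[OF that] i0(1) by (simp add: sum.remove[of "{..<k}" i0])
  have rest_lt: "deg_lt E (\<Sum>i\<in>{..<k} - {i0}. c $ i * P $$ (i, l))" if "l < n" "j0 \<le> l" for l
    using that by (intro deg_lt_sum) (auto intro: bound(2))
  have t0: "c $ i0 * P $$ (i0, j0) \<noteq> 0" "degree (c $ i0 * P $$ (i0, j0)) = E"
    using i0 entry0(2,3) unfolding E_def by (auto simp: degree_mult_eq)
  have sj0: "s $ j0 \<noteq> 0" "degree (s $ j0) = E"
    using degree_add_deg_lt[OF t0(1)] rest_lt[OF entry0(1)] split[OF entry0(1)] t0(2) by auto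
  have "degree (s $ l) \<le> degree (s $ j0)" if "l < n" for l
  proof -
    have "deg_lt (Suc E) (s $ l)" unfolding si[OF that] by (rule deg_lt_sum) (auto intro: bound(1) that)
    then show ?thesis using sj0 deg_lt_Suc_iff by auto
  qed
  moreover have "deg_lt (degree (s $ j0)) (s $ l)" if l: "l < n" "j0 < l" for l
  proof -
    have "deg_lt E (c $ i0 * P $$ (i0, l))"
      using deg_lt_mult[OF entry0(5)[OF l], of "c $ i0"] unfolding E_def by simp
    then show ?thesis unfolding split[OF l(1)] sj0(2) using rest_lt[OF l(1)] l(2) by (auto intro: deg_lt_add)
  qed
  ultimately have "vec_deg s = E" "pivot_index s = j0"
    using pivot_index_eqI[OF sc entry0(1) sj0(1)] sj0(2) by auto
  moreover have "s \<noteq> 0\<^sub>v n" using sj0(1) entry0(1) by auto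
  ultimately show thesis
    using that[OF i0(1)[unfolded k_def] i0(2)] unfolding n_def j0_def E_def by simp
qed

definition popov_row :: "nat \<Rightarrow> 'a::field poly vec set \<Rightarrow> nat \<Rightarrow> 'a poly vec" where
  "popov_row n S j = (SOME q. pivot_reduced n S j q)"

definition pivot_list :: "nat \<Rightarrow> 'a::field poly vec set \<Rightarrow> nat list" where
  "pivot_list n S = sorted_list_of_set (pivot_set n S)"

definition popov_mat :: "nat \<Rightarrow> 'a::field poly vec set \<Rightarrow> 'a poly mat" where
  "popov_mat n S = mat_of_rows n (map (popov_row n S) (pivot_list n S))"

lemma pivot_reduced_popov_row:
  assumes "poly_submodule n S" "j \<in> pivot_set n S"
  shows "pivot_reduced n S j (popov_row n S j)"
proof -
  obtain q where "pivot_reduced n S j q" using pivot_reduced_exists[OF assms] .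
  then show ?thesis unfolding popov_row_def by (rule someI)
qed

lemma pivot_list_props:
  assumes "poly_submodule n S"
  shows "set (pivot_list n S) = pivot_set n S" "length (pivot_list n S) = card (pivot_set n S)"
    "sorted_wrt (<) (pivot_list n S)"
  using finite_pivot_set[OF assms] by (auto simp: pivot_list_def strict_sorted_list_of_set)

lemma popov_mat_props:
  assumes S: "poly_submodule n S"
  defines "P \<equiv> popov_mat n S" and "k \<equiv> card (pivot_set n S)" and "js \<equiv> pivot_list n S"
  shows "P \<in> carrier_mat k n"
    "\<And>i. i < k \<Longrightarrow> js ! i \<in> pivot_set n S"
    "\<And>i. i < k \<Longrightarrow> row P i = popov_row n S (js ! i)"
    "\<And>i. i < k \<Longrightarrow> pivot_reduced n S (js ! i) (row P i)"
    "\<And>i. i < k \<Longrightarrow> pivot_index (row P i) = js ! i"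
    "\<And>i i'. i < i' \<Longrightarrow> i' < k \<Longrightarrow> js ! i < js ! i'"
proof -
  note jp = pivot_list_props[OF S, folded js_def k_def]
  show js: "\<And>i. i < k \<Longrightarrow> js ! i \<in> pivot_set n S" using jp(1,2) nth_mem by blast
  note red = pivot_reduced_popov_row[OF S js]
  have rc: "\<And>i. i < k \<Longrightarrow> popov_row n S (js ! i) \<in> carrier_vec n"
    using red unfolding pivot_reduced_def using pivot_minimal_props(1)[OF S] by blast
  show "P \<in> carrier_mat k n" unfolding P_def popov_mat_def js_def[symmetric] using jp(2) by auto
  show rows: "\<And>i. i < k \<Longrightarrow> row P i = popov_row n S (js ! i)"
    unfolding P_def popov_mat_def js_def[symmetric] using rc jp(2) by (subst mat_of_rows_row) auto
  show "\<And>i. i < k \<Longrightarrow> pivot_reduced n S (js ! i) (row P i)" using rows red by simp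
  then show "\<And>i. i < k \<Longrightarrow> pivot_index (row P i) = js ! i"
    unfolding pivot_reduced_def pivot_minimal_def by blast
  show "\<And>i i'. i < i' \<Longrightarrow> i' < k \<Longrightarrow> js ! i < js ! i'"
    using jp(2,3) by (simp add: sorted_wrt_iff_nth_less)
qed

lemma is_popov_popov_mat:
  assumes S: "poly_submodule n S"
  shows "is_popov (popov_mat n S)"
proof -
  define P where "P = popov_mat n S"
  define k where "k = card (pivot_set n S)"
  define js where "js = pivot_list n S"
  note pp = popov_mat_props[OF S, folded P_def k_def js_def]
  have dims: "dim_row P = k" "dim_col P = n" using pp(1) by auto
  have min: "\<And>i. i < k \<Longrightarrow> pivot_minimal n S (js ! i) (row P i)"
    using pp(4) unfolding pivot_reduced_def by auto
  note mp = pivot_minimal_props[OF S min]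
  have ent: "\<And>i l. i < k \<Longrightarrow> l < n \<Longrightarrow> P $$ (i, l) = row P i $ l" using dims by auto
  have "is_popov P" unfolding is_popov_def dims
  proof (intro conjI allI impI)
    fix i assume i: "i < k"
    show "row P i \<noteq> 0\<^sub>v n" using min[OF i] unfolding pivot_minimal_def by auto
    show "lead_coeff (P $$ (i, pivot_index (row P i))) = 1"
      using ent[OF i mp(2)[OF i]] mp(9)[OF i] pp(5)[OF i] by simp
    fix i' assume i': "i' < k" "i' \<noteq> i"
    have "js ! i \<noteq> js ! i'" using pp(6) i i' by (metis nat_neq_iff)
    then have "deg_lt (pivot_deg n S (js ! i)) (row P i' $ (js ! i))"
      using pp(4)[OF i'(1)] pp(2)[OF i] unfolding pivot_reduced_def by auto
    then show "P $$ (i', pivot_index (row P i)) = 0 \<or>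
        degree (P $$ (i', pivot_index (row P i))) < degree (P $$ (i, pivot_index (row P i)))"
      unfolding pp(5)[OF i] ent[OF i'(1) mp(2)[OF i]] ent[OF i mp(2)[OF i]] mp(4)[OF i] deg_lt_def .
  next
    fix i i' assume "i < i' \<and> i' < k"
    then show "pivot_index (row P i) < pivot_index (row P i')" using pp(5,6) by auto
  qed
  then show ?thesis unfolding P_def .
qed

lemma row_module_popov_mat:
  fixes M :: "'a::field poly mat"
  defines "n \<equiv> dim_col M" and "S \<equiv> row_module M"
  shows "row_module (popov_mat n S) = S"
proof -
  have S: "poly_submodule n S" unfolding n_def S_def by (rule poly_submodule_row_module)
  define P where "P = popov_mat n S"
  define k where "k = card (pivot_set n S)"
  define js where "js = pivot_list n S"
  note pp = popov_mat_props[OF S, folded P_def k_def js_def]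
  have rowS: "\<And>i. i < k \<Longrightarrow> row P i \<in> S"
    using pp(4) unfolding pivot_reduced_def pivot_minimal_def by auto
  show ?thesis unfolding P_def[symmetric]
  proof
    show "row_module P \<subseteq> S" unfolding S_def
      by (rule row_module_subset) (use pp(1) rowS in \<open>auto simp: n_def S_def\<close>)
    show "S \<subseteq> row_module P"
    proof (rule pivot_minimal_generate[OF S])
      show "poly_submodule n (row_module P)" using poly_submodule_row_module[of P] pp(1) by auto
      fix j assume "j \<in> pivot_set n S"
      then obtain i where i: "i < k" "js ! i = j"
        using pivot_list_props[OF S] unfolding js_def k_def by (metis in_set_conv_nth)
      have "row P i \<in> row_module P" using pp(1) i by (intro row_in_row_module) auto
      then show "\<exists>q\<in>row_module P. pivot_minimal n S j q"
        using pp(4)[OF i(1)] i(2) unfolding pivot_reduced_def by auto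
    qed
  qed
qed

lemma popov_row_pivot_deg:
  assumes S: "poly_submodule n S" and P: "is_popov P" "dim_col P = n" "row_module P = S"
    and j: "j \<in> pivot_set n S"
  obtains i where "i < dim_row P" "pivot_index (row P i) = j" "vec_deg (row P i) = pivot_deg n S j"
proof -
  obtain q where q: "pivot_minimal n S j q" using pivot_minimal_exists[OF S j] .
  then have "q \<in> row_module P" using P(3) unfolding pivot_minimal_def by auto
  then obtain c where c: "c \<in> carrier_vec (dim_row P)" "q = transpose_mat P *\<^sub>v c"
    unfolding row_module_def by auto
  have "c \<noteq> 0\<^sub>v (dim_row P)"
  proof
    assume "c = 0\<^sub>v (dim_row P)"
    then have "q = 0\<^sub>v n" using c(2) P(2) by (auto intro!: eq_vecI)
    then show False using q unfolding pivot_minimal_def by auto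
  qed
  then obtain i where i: "i < dim_row P" "pivot_index q = pivot_index (row P i)"
      "vec_deg q = degree (c $ i) + vec_deg (row P i)"
    using popov_predictable_pivot[OF P(1) c(1), folded c(2)] by blast
  have "row P i \<in> S" "row P i \<noteq> 0\<^sub>v n"
    using row_in_row_module[OF i(1)] is_popov_rowD[OF P(1) i(1)] P(2,3) by auto
  from pivot_deg_le[OF this] have "pivot_deg n S j \<le> vec_deg (row P i)"
    using i(2) q unfolding pivot_minimal_def by auto
  moreover have "vec_deg q = pivot_deg n S j" "pivot_index q = j"
    using q unfolding pivot_minimal_def by auto
  ultimately show thesis using that i by auto
qed

lemma popov_row_pivot_reduced:
  assumes S: "poly_submodule n S" and P: "is_popov P" "dim_col P = n" "row_module P = S"
    and i: "i < dim_row P"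
  shows "pivot_reduced n S (pivot_index (row P i)) (row P i)"
proof -
  define piv where "piv i = pivot_index (row P i)" for i
  have rS: "row P i' \<in> S" "row P i' \<noteq> 0\<^sub>v n" if "i' < dim_row P" for i'
    using row_in_row_module[OF that] is_popov_rowD[OF P(1) that] P(2,3) by auto
  have rp: "piv i' < n" "degree (row P i' $ piv i') = vec_deg (row P i')" if "i' < dim_row P" for i'
    using pivot_index_props(1,3)[OF is_popov_rowD[OF P(1) that]] P(2) unfolding piv_def by auto
  have ent: "\<And>i' l. i' < dim_row P \<Longrightarrow> l < n \<Longrightarrow> row P i' $ l = P $$ (i', l)" using P(2) by auto
  have deg: "vec_deg (row P i') = pivot_deg n S (piv i')" if i': "i' < dim_row P" for i'
  proof -
    obtain i0 where i0: "i0 < dim_row P" "piv i0 = piv i'" "vec_deg (row P i0) = pivot_deg n S (piv i')"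
      using popov_row_pivot_deg[OF S P pivot_index_in_pivot_set[OF rS[OF i']]] unfolding piv_def .
    have "i0 = i'" using is_popov_pivot_inj[OF P(1) i0(1) i' i0(2)[unfolded piv_def]] .
    then show ?thesis using i0(3) by simp
  qed
  have "pivot_minimal n S (piv i) (row P i)"
    unfolding pivot_minimal_def using rS[OF i] deg[OF i] P(1) i ent[OF i rp(1)[OF i]]
    unfolding is_popov_def piv_def by auto
  moreover have "deg_lt (pivot_deg n S l) (row P i $ l)" if l: "l \<in> pivot_set n S" "l \<noteq> piv i" for l
  proof -
    obtain i' where i': "i' < dim_row P" "piv i' = l" "vec_deg (row P i') = pivot_deg n S l"
      using popov_row_pivot_deg[OF S P l(1)] unfolding piv_def .
    then have "i' \<noteq> i" using l(2) by auto
    then have "P $$ (i, piv i') = 0 \<or> degree (P $$ (i, piv i')) < degree (P $$ (i', piv i'))"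
      using P(1) i i'(1) unfolding is_popov_def piv_def by auto
    then show ?thesis
      using ent[OF i rp(1)[OF i'(1)]] ent[OF i'(1) rp(1)[OF i'(1)]] rp(2)[OF i'(1)] i'(2,3)
      unfolding deg_lt_def by auto
  qed
  ultimately show ?thesis unfolding pivot_reduced_def piv_def by auto
qed

lemma popov_mat_unique:
  assumes S: "poly_submodule n S" and P: "is_popov P" "dim_col P = n" "row_module P = S"
  shows "P = popov_mat n S"
proof -
  define k where "k = dim_row P"
  define piv where "piv i = pivot_index (row P i)" for i
  have red: "\<And>i. i < k \<Longrightarrow> pivot_reduced n S (piv i) (row P i)"
    using popov_row_pivot_reduced[OF S P] unfolding k_def piv_def .
  have pivJ: "\<And>i. i < k \<Longrightarrow> piv i \<in> pivot_set n S"
    using red unfolding pivot_reduced_def using pivot_minimal_props(7)[OF S] by blast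
  have rows: "\<And>i. i < k \<Longrightarrow> row P i = popov_row n S (piv i)"
    using pivot_reduced_unique[OF S red pivot_reduced_popov_row[OF S pivJ]] .
  have set: "set (map piv [0..<k]) = pivot_set n S"
  proof
    show "pivot_set n S \<subseteq> set (map piv [0..<k])"
    proof
      fix j assume j: "j \<in> pivot_set n S"
      obtain i where "i < k" "piv i = j"
        using popov_row_pivot_deg[OF S P j] unfolding k_def piv_def by blast
      then show "j \<in> set (map piv [0..<k])" by auto
    qed
  qed (use pivJ in auto)
  moreover have sorted: "sorted_wrt (<) (map piv [0..<k])"
    unfolding sorted_wrt_iff_nth_less using is_popov_pivot_less[OF P(1)]
    unfolding piv_def k_def by auto
  moreover have "length (map piv [0..<k]) = card (pivot_set n S)"
    using distinct_card[of "map piv [0..<k]"] sorted set by (simp add: strict_sorted_iff)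
  ultimately have "sorted_list_of_set (pivot_set n S) = map piv [0..<k]"
    by (intro sorted_list_of_set_unique[THEN iffD1]) (auto simp: finite_pivot_set[OF S])
  then have pl: "map piv [0..<k] = pivot_list n S" unfolding pivot_list_def ..
  have card: "card (pivot_set n S) = k"
    using arg_cong[OF pl, of length] pivot_list_props(2)[OF S] by simp
  have nth: "pivot_list n S ! i = piv i" if "i < k" for i
    using pl[symmetric] that by simp
  note pp = popov_mat_props[OF S, unfolded card]
  show ?thesis
  proof (rule eq_rowI)
    show "dim_row P = dim_row (popov_mat n S)" "dim_col P = dim_col (popov_mat n S)"
      using pp(1) P(2) unfolding k_def by auto
    fix i assume "i < dim_row (popov_mat n S)"
    then have i: "i < k" using pp(1) by auto
    show "row P i = row (popov_mat n S) i" unfolding rows[OF i] pp(3)[OF i] nth[OF i] ..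
  qed
qed

section \<open>The rank is the number of pivots\<close>

lemma mult_mat_vec_unit_vec:
  assumes "(B :: 'a::comm_ring_1 mat) \<in> carrier_mat n k" "t < k"
  shows "B *\<^sub>v unit_vec k t = col B t"
proof (rule eq_vecI)
  fix i assume "i < dim_vec (col B t)"
  then have i: "i < n" using assms by auto
  have "row B i \<bullet> unit_vec k t = row B i $ t" by (rule scalar_prod_right_unit[OF assms(2)])
  then show "(B *\<^sub>v unit_vec k t) $ i = col B t $ i" using i assms by auto
qed (use assms in auto)

context vec_space
begin

lemma mult_mat_vec_in_span_cols:
  assumes B: "B \<in> carrier_mat n k" and v: "v \<in> carrier_vec k"
  shows "B *\<^sub>v v \<in> span (set (cols B))"
proof -
  have cB: "set (cols B) \<subseteq> carrier_vec n" using B cols_dim by blast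
  have "lincomb_list (\<lambda>i. v $ i) (cols B) = mat_of_cols n (cols B) *\<^sub>v vec (length (cols B)) (\<lambda>i. v $ i)"
    by (rule lincomb_list_as_mat_mult) (use cB in auto)
  also have "mat_of_cols n (cols B) = B" using B mat_of_cols_cols[of B] by auto
  also have "vec (length (cols B)) (\<lambda>i. v $ i) = v" using B v by (intro eq_vecI) auto
  finally have e: "B *\<^sub>v v = lincomb_list (\<lambda>i. v $ i) (cols B)" by simp
  have "B *\<^sub>v v \<in> span_list (cols B)" unfolding e by (rule in_span_listI) auto
  then show ?thesis using span_list_as_span[OF cB] by simp
qed

lemma rank_mult_le:
  assumes B: "B \<in> carrier_mat n k" and C: "C \<in> carrier_mat k nc"
  shows "rank (B * C) \<le> k"
proof -
  have BC: "B * C \<in> carrier_mat n nc" using B C by auto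
  obtain S where S: "maximal S (\<lambda>T. T \<subseteq> set (cols (B * C)) \<and> lin_indpt T)"
    using maximal_exists[of "\<lambda>T. T \<subseteq> set (cols (B * C)) \<and> lin_indpt T" "card (set (cols (B * C)))" "{}"]
    by (meson List.finite_set card_mono empty_iff empty_subsetI finite_lin_indpt2 rev_finite_subset)
  have SBC: "S \<subseteq> set (cols (B * C))" "lin_indpt S" using S unfolding maximal_def by auto
  have "set (cols (B * C)) \<subseteq> span (set (cols B))"
  proof
    fix x assume "x \<in> set (cols (B * C))"
    then obtain j where "j < nc" "x = col (B * C) j"
      using BC by (metis carrier_matD(2) cols_length cols_nth in_set_conv_nth)
    then show "x \<in> span (set (cols B))"
      using col_mult2[OF B C] mult_mat_vec_in_span_cols[OF B] C by auto
  qed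
  then have Ssp: "S \<subseteq> span (set (cols B))" using SBC(1) by blast
  have cB: "set (cols B) \<subseteq> carrier_vec n" using B cols_dim by blast
  obtain T :: "'a vec set" where "int (card T) \<le> int (card (set (cols B))) - int (card S)"
    using replacement[OF finite_subset[OF SBC(1) List.finite_set] List.finite_set cB SBC(2) Ssp] by blast
  then have "card S \<le> card (set (cols B))" by linarith
  also have "\<dots> \<le> k" using card_length[of "cols B"] B by auto
  finally show ?thesis using rank_card_indpt[OF BC S] by simp
qed

lemma rank_ge_inj_cols:
  assumes A: "A \<in> carrier_mat n nc" and B: "B \<in> carrier_mat n k"
    and cols: "set (cols B) \<subseteq> set (cols A)"
    and inj: "\<And>v. v \<in> carrier_vec k \<Longrightarrow> B *\<^sub>v v = 0\<^sub>v n \<Longrightarrow> v = 0\<^sub>v k"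
  shows "k \<le> rank A"
proof -
  have dist: "distinct (cols B)"
  proof (rule ccontr)
    assume "\<not> distinct (cols B)"
    then obtain t t' where tt: "t < k" "t' < k" "t \<noteq> t'" "col B t = col B t'"
      using B by (metis carrier_matD(2) cols_length cols_nth distinct_conv_nth)
    define v :: "'a vec" where "v = unit_vec k t - unit_vec k t'"
    have "B *\<^sub>v v = col B t - col B t'"
      unfolding v_def using B tt mult_mat_vec_unit_vec[OF B]
      by (auto simp: mult_minus_distrib_mat_vec)
    then have "v = 0\<^sub>v k" using inj[of v] tt(4) B unfolding v_def by auto
    moreover have "v $ t = 1" unfolding v_def using tt by auto
    ultimately show False using tt by auto
  qed
  have "lin_indpt (set (cols B))"
  proof
    assume "lin_dep (set (cols B))"
    then obtain v where "v \<in> carrier_vec k" "v \<noteq> 0\<^sub>v k" "B *\<^sub>v v = 0\<^sub>v n"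
      using lin_depE[OF B _ dist] by blast
    then show False using inj by blast
  qed
  then have "card (set (cols B)) \<le> rank A" by (rule rank_ge_card_indpt[OF A cols])
  then show ?thesis using distinct_card[OF dist] B by auto
qed

end

interpretation to_fract_hom: inj_comm_ring_hom "to_fract :: 'b::idom \<Rightarrow> 'b fract"
  by unfold_locales auto

lemma fract_vec_clear_denominators:
  fixes v :: "'b::idom fract vec"
  assumes "v \<in> carrier_vec k"
  obtains d w where "d \<noteq> 0" "w \<in> carrier_vec k" "map_vec to_fract w = to_fract d \<cdot>\<^sub>v v"
proof -
  have "\<forall>t. \<exists>a b. b \<noteq> 0 \<and> v $ t = Fract a b" by (metis Fract_cases)
  then obtain a b where ab: "\<And>t. b t \<noteq> 0 \<and> v $ t = Fract (a t) (b t)" by metis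
  define d where "d = (\<Prod>t<k. b t)"
  define w where "w = vec k (\<lambda>t. a t * (\<Prod>s\<in>{..<k} - {t}. b s))"
  have "map_vec to_fract w = to_fract d \<cdot>\<^sub>v v"
  proof (rule eq_vecI)
    fix t assume "t < dim_vec (to_fract d \<cdot>\<^sub>v v)"
    then have t: "t < k" using assms by auto
    have dd: "d = b t * (\<Prod>s\<in>{..<k} - {t}. b s)" unfolding d_def using t
      by (simp add: prod.remove)
    have "map_vec to_fract w $ t = Fract (a t * (\<Prod>s\<in>{..<k} - {t}. b s)) 1"
      unfolding w_def using t by (simp add: to_fract_def)
    also have "\<dots> = Fract (d * a t) (b t)" using ab[of t] unfolding dd
      by (simp add: eq_fract ac_simps)
    also have "\<dots> = (to_fract d \<cdot>\<^sub>v v) $ t" using t assms ab[of t] by (simp add: to_fract_def)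
    finally show "map_vec to_fract w $ t = (to_fract d \<cdot>\<^sub>v v) $ t" .
  qed (use assms in \<open>auto simp: w_def\<close>)
  moreover have "d \<noteq> 0" unfolding d_def using ab by auto
  moreover have "w \<in> carrier_vec k" unfolding w_def by simp
  ultimately show thesis using that by blast
qed

lemma to_fract_mult_mat_vec_inj:
  fixes Q :: "'b::idom mat"
  assumes Q: "Q \<in> carrier_mat m k"
    and inj: "\<And>w. w \<in> carrier_vec k \<Longrightarrow> Q *\<^sub>v w = 0\<^sub>v m \<Longrightarrow> w = 0\<^sub>v k"
    and v: "v \<in> carrier_vec k" "map_mat to_fract Q *\<^sub>v v = 0\<^sub>v m"
  shows "v = 0\<^sub>v k"
proof -
  obtain d w where dw: "d \<noteq> 0" "w \<in> carrier_vec k" "map_vec to_fract w = to_fract d \<cdot>\<^sub>v v"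
    using fract_vec_clear_denominators[OF v(1)] .
  have "map_vec to_fract (Q *\<^sub>v w) = map_mat to_fract Q *\<^sub>v map_vec to_fract w"
    by (rule to_fract_hom.mult_mat_vec_hom[OF Q dw(2)])
  also have "\<dots> = to_fract d \<cdot>\<^sub>v (map_mat to_fract Q *\<^sub>v v)" unfolding dw(3)
    using Q v(1) by (intro mult_mat_vec[of _ m k]) auto
  also have "\<dots> = 0\<^sub>v m" unfolding v(2) by (intro eq_vecI) auto
  finally have "map_vec to_fract (Q *\<^sub>v w) = 0\<^sub>v m" .
  then have "Q *\<^sub>v w = 0\<^sub>v m" by simp
  then have "w = 0\<^sub>v k" by (rule inj[OF dw(2)])
  show "v = 0\<^sub>v k"
  proof (rule eq_vecI)
    fix t assume "t < dim_vec (0\<^sub>v k :: 'b fract vec)"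
    then have t: "t < k" by simp
    have "(to_fract d \<cdot>\<^sub>v v) $ t = 0" using arg_cong[OF dw(3), of "\<lambda>x. x $ t"] \<open>w = 0\<^sub>v k\<close> t by simp
    then show "v $ t = (0\<^sub>v k :: 'b fract vec) $ t" using t v(1) dw(1) by auto
  qed (use v in auto)
qed

text \<open>The entry of \<open>Q w\<close> in a row \<open>t0\<close> maximising \<open>degree (w $ t0) + dd t0\<close> is dominated
  by its diagonal term.\<close>

lemma degree_dominant_diag_inj:
  fixes Q :: "'a::field poly mat"
  assumes Q: "Q \<in> carrier_mat k k"
    and diag: "\<And>t. t < k \<Longrightarrow> Q $$ (t, t) \<noteq> 0 \<and> degree (Q $$ (t, t)) = dd t"
    and off: "\<And>s t. s < k \<Longrightarrow> t < k \<Longrightarrow> s \<noteq> t \<Longrightarrow> deg_lt (dd t) (Q $$ (s, t))"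
    and w: "w \<in> carrier_vec k" "Q *\<^sub>v w = 0\<^sub>v k"
  shows "w = 0\<^sub>v k"
proof (rule ccontr)
  assume w0: "w \<noteq> 0\<^sub>v k"
  define f where "f t = degree (w $ t) + dd t" for t
  define I where "I = {t. t < k \<and> w $ t \<noteq> 0}"
  have finI: "finite I" unfolding I_def by auto
  obtain t where "t < k" "w $ t \<noteq> 0" using vec_nonzero_index[OF w(1) w0] .
  then have neI: "I \<noteq> {}" unfolding I_def by auto
  define E where "E = Max (f ` I)"
  have fE: "\<And>t. t \<in> I \<Longrightarrow> f t \<le> E" unfolding E_def using finI by auto
  have "E \<in> f ` I" unfolding E_def using finI neI by auto
  then obtain t0 where t0: "t0 \<in> I" "f t0 = E" by auto
  have t0k: "t0 < k" "w $ t0 \<noteq> 0" using t0 unfolding I_def by auto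
  have "(Q *\<^sub>v w) $ t0 = (\<Sum>s<k. Q $$ (t0, s) * w $ s)"
    using Q w(1) t0k by (auto simp: scalar_prod_def lessThan_atLeast0 intro!: sum.cong)
  also have "\<dots> = Q $$ (t0, t0) * w $ t0 + (\<Sum>s\<in>{..<k} - {t0}. Q $$ (t0, s) * w $ s)"
    using t0k by (simp add: sum.remove)
  finally have split: "(Q *\<^sub>v w) $ t0 = Q $$ (t0, t0) * w $ t0 + (\<Sum>s\<in>{..<k} - {t0}. Q $$ (t0, s) * w $ s)" .
  have lead: "Q $$ (t0, t0) * w $ t0 \<noteq> 0" "degree (Q $$ (t0, t0) * w $ t0) = E"
    using diag[OF t0k(1)] t0k t0(2) unfolding f_def by (auto simp: degree_mult_eq)
  have "deg_lt E (\<Sum>s\<in>{..<k} - {t0}. Q $$ (t0, s) * w $ s)"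
  proof (rule deg_lt_sum)
    fix s assume s: "s \<in> {..<k} - {t0}"
    show "deg_lt E (Q $$ (t0, s) * w $ s)"
    proof (cases "w $ s = 0")
      case False
      then have "f s \<le> E" using fE s unfolding I_def by auto
      moreover have "deg_lt (degree (w $ s) + dd s) (w $ s * Q $$ (t0, s))"
        using deg_lt_mult[OF off[of t0 s]] s t0k by auto
      ultimately show ?thesis unfolding f_def by (auto simp: mult.commute intro: deg_lt_mono)
    qed simp
  qed auto
  then have "(Q *\<^sub>v w) $ t0 \<noteq> 0" unfolding split using degree_add_deg_lt[OF lead(1)] lead(2) by auto
  then show False using w(2) t0k by auto
qed

definition col_select :: "'a mat \<Rightarrow> nat list \<Rightarrow> 'a mat" where
  "col_select M js = mat (dim_row M) (length js) (\<lambda>(i, t). M $$ (i, js ! t))"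

lemma col_select_carrier: "col_select M js \<in> carrier_mat (dim_row M) (length js)"
  unfolding col_select_def by simp

lemma map_mat_col_select:
  assumes "set js \<subseteq> {..<dim_col M}"
  shows "map_mat f (col_select M js) = col_select (map_mat f M) js"
proof (rule eq_matI)
  fix i t assume "i < dim_row (col_select (map_mat f M) js)" "t < dim_col (col_select (map_mat f M) js)"
  moreover from this have "js ! t < dim_col M" using assms nth_mem unfolding col_select_def by fastforce
  ultimately show "map_mat f (col_select M js) $$ (i, t) = col_select (map_mat f M) js $$ (i, t)"
    unfolding col_select_def by auto
qed (auto simp: col_select_def)

lemma set_cols_col_select:
  assumes "set js \<subseteq> {..<dim_col M}"
  shows "set (cols (col_select M js)) \<subseteq> set (cols M)"
proof
  fix x assume "x \<in> set (cols (col_select M js))"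
  then obtain t where t: "t < length js" "x = col (col_select M js) t"
    using col_select_carrier[of M js] by (metis carrier_matD(2) cols_length cols_nth in_set_conv_nth)
  then have "js ! t < dim_col M" using assms nth_mem by blast
  moreover have "x = col M (js ! t)" unfolding t(2) col_select_def using t(1) calculation
    by (intro eq_vecI) auto
  ultimately show "x \<in> set (cols M)" by (metis cols_length cols_nth nth_mem)
qed

lemma col_select_mult:
  assumes U: "U \<in> carrier_mat k (dim_row M)" and js: "set js \<subseteq> {..<dim_col M}"
  shows "col_select (U * M) js = U * col_select M js"
proof (rule eq_matI)
  fix s t assume "s < dim_row (U * col_select M js)" "t < dim_col (U * col_select M js)"
  then have s: "s < k" and t: "t < length js" using U col_select_carrier[of M js] by auto
  then have "js ! t < dim_col M" using js nth_mem by blast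
  then have "col (col_select M js) t = col M (js ! t)"
    unfolding col_select_def using t by (intro eq_vecI) auto
  then show "col_select (U * M) js $$ (s, t) = (U * col_select M js) $$ (s, t)"
    unfolding col_select_def using s t U \<open>js ! t < dim_col M\<close> col_select_carrier[of M js] by simp
qed (use U col_select_carrier[of M js] in \<open>auto simp: col_select_def\<close>)

lemma popov_mat_pivot_cols_inj:
  assumes S: "poly_submodule n S"
    and w: "w \<in> carrier_vec (card (pivot_set n S))"
      "col_select (popov_mat n S) (pivot_list n S) *\<^sub>v w = 0\<^sub>v (card (pivot_set n S))"
  shows "w = 0\<^sub>v (card (pivot_set n S))"
proof -
  define P where "P = popov_mat n S"
  define k where "k = card (pivot_set n S)"
  define js where "js = pivot_list n S"
  note pp = popov_mat_props[OF S, folded P_def k_def js_def]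
  have len: "length js = k" using pivot_list_props(2)[OF S] unfolding js_def k_def .
  have min: "\<And>i. i < k \<Longrightarrow> pivot_minimal n S (js ! i) (row P i)"
    using pp(4) unfolding pivot_reduced_def by auto
  note mp = pivot_minimal_props[OF S min]
  have ent: "col_select P js $$ (s, t) = row P s $ (js ! t)" if "s < k" "t < k" for s t
    unfolding col_select_def using pp(1) mp(2) len that by auto
  have Qc: "col_select P js \<in> carrier_mat k k" using col_select_carrier[of P js] pp(1) len by simp
  have wk: "w \<in> carrier_vec k" "col_select P js *\<^sub>v w = 0\<^sub>v k"
    using w unfolding P_def k_def js_def .
  have "w = 0\<^sub>v k"
  proof (rule degree_dominant_diag_inj[OF Qc _ _ wk, where dd = "\<lambda>t. pivot_deg n S (js ! t)"])
    fix t assume t: "t < k"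
    show "col_select P js $$ (t, t) \<noteq> 0 \<and> degree (col_select P js $$ (t, t)) = pivot_deg n S (js ! t)"
      using ent[OF t t] mp(3,4)[OF t] by simp
    fix s assume s: "s < k" "s \<noteq> t"
    have "js ! t \<noteq> js ! s" using pp(6) s t by (metis nat_neq_iff)
    then show "deg_lt (pivot_deg n S (js ! t)) (col_select P js $$ (s, t))"
      using ent[OF s(1) t] pp(4)[OF s(1)] pp(2)[OF t] unfolding pivot_reduced_def by auto
  qed
  then show ?thesis unfolding k_def .
qed

lemma poly_mat_rank_le_card_pivot_set:
  fixes M :: "'a::field poly mat"
  shows "poly_mat_rank M \<le> card (pivot_set (dim_col M) (row_module M))"
proof -
  define n where "n = dim_col M"
  define m where "m = dim_row M"
  define S where "S = row_module M"
  define P where "P = popov_mat n S"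
  define k where "k = card (pivot_set n S)"
  have S: "poly_submodule n S" unfolding n_def S_def by (rule poly_submodule_row_module)
  note pp = popov_mat_props[OF S, folded P_def k_def]
  have PM: "row_module P = S" unfolding P_def S_def n_def by (rule row_module_popov_mat)
  have rowsM: "row M i \<in> row_module P" if "i < dim_row M" for i
    using row_in_row_module[OF that] PM unfolding S_def by simp
  have dimM: "dim_col M = dim_col P" using pp(1) unfolding n_def by simp
  obtain C where C: "C \<in> carrier_mat (dim_row M) (dim_row P)" and MC: "M = C * P"
    using rows_in_row_module_factor[OF dimM rowsM] .
  have Cc: "C \<in> carrier_mat m k" using C pp(1) unfolding m_def by simp
  interpret vs: vec_space "TYPE('a poly fract)" m .
  have "vs.rank (map_mat to_fract C * map_mat to_fract P) \<le> k"
    by (rule vs.rank_mult_le) (use Cc pp(1) in auto)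
  moreover have "map_mat to_fract M = map_mat to_fract C * map_mat to_fract P"
    unfolding MC by (rule to_fract_hom.mat_hom_mult[OF Cc pp(1)])
  ultimately show ?thesis unfolding poly_mat_rank_def m_def k_def n_def S_def by simp
qed

lemma card_pivot_set_le_poly_mat_rank:
  fixes M :: "'a::field poly mat"
  shows "card (pivot_set (dim_col M) (row_module M)) \<le> poly_mat_rank M"
proof -
  define n where "n = dim_col M"
  define m where "m = dim_row M"
  define S where "S = row_module M"
  define P where "P = popov_mat n S"
  define k where "k = card (pivot_set n S)"
  define js where "js = pivot_list n S"
  have S: "poly_submodule n S" unfolding n_def S_def by (rule poly_submodule_row_module)
  note pp = popov_mat_props[OF S, folded P_def k_def js_def]
  have PM: "row_module P = S" unfolding P_def S_def n_def by (rule row_module_popov_mat)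
  have len: "length js = k" using pivot_list_props(2)[OF S] unfolding js_def k_def .
  have js: "set js \<subseteq> {..<dim_col M}"
    using pivot_list_props(1)[OF S] pivot_set_subset[OF S] unfolding js_def n_def by simp
  have rowsP: "row P i \<in> row_module M" if "i < dim_row P" for i
    using row_in_row_module[OF that] PM unfolding S_def by simp
  have dimP: "dim_col P = dim_col M" using pp(1) unfolding n_def by simp
  obtain U where U: "U \<in> carrier_mat (dim_row P) (dim_row M)" and PU: "P = U * M"
    using rows_in_row_module_factor[OF dimP rowsP] .
  have Uc: "U \<in> carrier_mat k m" using U pp(1) unfolding m_def by simp
  define MJ where "MJ = col_select M js"
  have MJc: "MJ \<in> carrier_mat m k" unfolding MJ_def m_def using col_select_carrier len by metis
  have inj: "w = 0\<^sub>v k" if w: "w \<in> carrier_vec k" "MJ *\<^sub>v w = 0\<^sub>v m" for w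
  proof -
    have "col_select P js *\<^sub>v w = U *\<^sub>v (MJ *\<^sub>v w)"
      unfolding PU MJ_def col_select_mult[OF U[unfolded m_def] js]
      using U MJc[unfolded MJ_def] w(1) pp(1) m_def by simp
    also have "\<dots> = 0\<^sub>v k" unfolding w(2) using Uc by (intro eq_vecI) auto
    finally show ?thesis
      using popov_mat_pivot_cols_inj[OF S] w(1) unfolding P_def k_def js_def by blast
  qed
  interpret vs: vec_space "TYPE('a poly fract)" m .
  have "k \<le> vs.rank (map_mat to_fract M)"
  proof (rule vs.rank_ge_inj_cols)
    show "map_mat to_fract M \<in> carrier_mat m n" unfolding m_def n_def by simp
    show "map_mat to_fract MJ \<in> carrier_mat m k" using MJc by simp
    show "set (cols (map_mat to_fract MJ)) \<subseteq> set (cols (map_mat to_fract M))"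
      unfolding MJ_def map_mat_col_select[OF js] using js by (intro set_cols_col_select) simp
    show "v = 0\<^sub>v k" if "v \<in> carrier_vec k" "map_mat to_fract MJ *\<^sub>v v = 0\<^sub>v m" for v
      using to_fract_mult_mat_vec_inj[OF MJc inj that] .
  qed
  then show ?thesis unfolding poly_mat_rank_def m_def k_def n_def S_def .
qed

lemma poly_mat_rank_eq_card_pivot_set:
  "poly_mat_rank M = card (pivot_set (dim_col M) (row_module M))"
  using poly_mat_rank_le_card_pivot_set card_pivot_set_le_poly_mat_rank le_antisym by blast

lemma poly_mat_rank_le_dim_row:
  fixes R :: "'a::field poly mat"
  shows "poly_mat_rank R \<le> dim_row R"
proof -
  interpret vs: vec_space "TYPE('a poly fract)" "dim_row R" .
  have "vs.rank (1\<^sub>m (dim_row R) * map_mat to_fract R) \<le> dim_row R"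
    by (rule vs.rank_mult_le) auto
  then show ?thesis unfolding poly_mat_rank_def by simp
qed

lemma pivot_support_eq_pivot_list:
  fixes M :: "'a::field poly mat"
  shows "pivot_support M = pivot_list (dim_col M) (row_module M)"
proof -
  define n where "n = dim_col M"
  define S where "S = row_module M"
  define P where "P = popov_mat n S"
  have S: "poly_submodule n S" unfolding n_def S_def by (rule poly_submodule_row_module)
  note pp = popov_mat_props[OF S, folded P_def]
  have form: "is_popov_form_of M P"
    unfolding is_popov_form_of_def
    using pp(1) is_popov_popov_mat[OF S] row_module_popov_mat[of M] poly_mat_rank_eq_card_pivot_set[of M]
    unfolding P_def n_def S_def by auto
  have "popov_form M = P" unfolding popov_form_def
  proof (rule the_equality)
    fix P' assume "is_popov_form_of M P'"
    then have "is_popov P'" "dim_col P' = n" "row_module P' = S"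
      unfolding is_popov_form_of_def n_def S_def by auto
    then show "P' = P" unfolding P_def by (rule popov_mat_unique[OF S])
  qed (rule form)
  then have "pivot_support M = map (\<lambda>i. pivot_list n S ! i) [0..<length (pivot_list n S)]"
    unfolding pivot_support_def using pp(1,5) pivot_list_props(2)[OF S] by auto
  also have "\<dots> = pivot_list n S" by (rule map_nth)
  finally show ?thesis unfolding n_def S_def .
qed

section \<open>Kernel bases\<close>

lemma right_kernel_basis_mult_eq_0:
  fixes A K :: "'a::field poly mat"
  assumes A: "A \<in> carrier_mat m n" and K: "K \<in> carrier_mat n k"
    and basis: "cols_basis_of K (right_kernel A)"
  shows "A * K = 0\<^sub>m m k"
proof (rule eq_matI)
  fix i j assume "i < dim_row (0\<^sub>m m k :: 'a poly mat)" "j < dim_col (0\<^sub>m m k :: 'a poly mat)"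
  then have i: "i < m" and j: "j < k" by auto
  have "K *\<^sub>v unit_vec k j \<in> right_kernel A"
    using basis K unfolding cols_basis_of_def by auto
  then have "A *\<^sub>v col K j = 0\<^sub>v m"
    unfolding right_kernel_def mult_mat_vec_unit_vec[OF K j] using A by auto
  then show "(A * K) $$ (i, j) = 0\<^sub>m m k $$ (i, j)"
    using col_mult2[OF A K j] i j A K by (metis carrier_matD index_col index_mult_mat(2,3) index_zero_mat(1) index_zero_vec(1))
qed (use A K in auto)

lemma row_module_subset_left_kernel:
  fixes A K :: "'a::field poly mat"
  assumes A: "A \<in> carrier_mat m n" and K: "K \<in> carrier_mat n k" and AK: "A * K = 0\<^sub>m m k"
  shows "row_module A \<subseteq> left_kernel K"
proof
  fix x assume "x \<in> row_module A"
  then obtain c where c: "c \<in> carrier_vec m" "x = transpose_mat A *\<^sub>v c"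
    unfolding row_module_def using A by auto
  have "transpose_mat K *\<^sub>v x = (transpose_mat K * transpose_mat A) *\<^sub>v c"
    using c A K by (simp add: assoc_mult_mat_vec[of _ k n _ m])
  also have "transpose_mat K * transpose_mat A = 0\<^sub>m k m"
    using transpose_mult[OF A K] AK by simp
  also have "0\<^sub>m k m *\<^sub>v c = 0\<^sub>v (dim_col K)" using c K by (intro eq_vecI) auto
  finally show "x \<in> left_kernel K" unfolding left_kernel_def using c A K by auto
qed

lemma left_kernel_subset_row_module:
  "rows_basis_of R (left_kernel K) \<Longrightarrow> left_kernel K \<subseteq> row_module R"
  unfolding rows_basis_of_def row_module_def by blast

theorem lemma4p2:
  fixes A K R :: "'a::field poly mat"
  assumes "A \<in> carrier_mat m n"
    and "poly_mat_rank A = r" and "r \<ge> 1"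
    and "K \<in> carrier_mat n (n - r)" and "is_right_kernel_basis A K"
    and "R \<in> carrier_mat r n" and "is_left_kernel_basis K R"
  shows "pivot_support A = pivot_support R"
proof -
  have nA: "dim_col A = n" and nR: "dim_col R = n" using assms(1,6) by auto
  have "A * K = 0\<^sub>m m (n - r)"
    using right_kernel_basis_mult_eq_0[OF assms(1,4)] assms(5) unfolding is_right_kernel_basis_def by blast
  then have "row_module A \<subseteq> row_module R"
    using row_module_subset_left_kernel[OF assms(1,4)] left_kernel_subset_row_module assms(7)
    unfolding is_left_kernel_basis_def by blast
  then have sub: "pivot_set n (row_module A) \<subseteq> pivot_set n (row_module R)" by (rule pivot_set_mono)
  have "card (pivot_set n (row_module A)) = r"
    using poly_mat_rank_eq_card_pivot_set[of A] assms(2) nA by simp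
  moreover have "card (pivot_set n (row_module R)) \<le> r"
    using poly_mat_rank_eq_card_pivot_set[of R] poly_mat_rank_le_dim_row[of R] assms(6) nR by simp
  moreover have "finite (pivot_set n (row_module R))"
    using finite_pivot_set[OF poly_submodule_row_module[of R]] nR by simp
  ultimately have "pivot_set n (row_module A) = pivot_set n (row_module R)"
    using card_seteq[OF _ sub] by simp
  then show ?thesis
    using pivot_support_eq_pivot_list[of A] pivot_support_eq_pivot_list[of R] nA nR
    unfolding pivot_list_def by simp
qed

end
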